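(* Let $n\ge1$, $m>0$, $\alpha\in\mathbf R$, $\beta,\gamma>0$, $1\le p,q<\infty$. If $P_{\beta m}$ is bounded from $L^p_{\alpha m}$ into $L^q_{\gamma m}$, then $c\ge1$, where $c=\frac{4\gamma}{\beta^2q}\left(\beta-\frac{\alpha}{p}\right)$ (equivalently $q\le q_{\max}:=\frac{4\gamma}{\beta^2}(\beta-\frac{\alpha}{p})$). Moreover, in that case $\beta-\frac{\alpha}{p}>0$.
   Context: For $\alpha\in\mathbf R$, $m>0$ let $d\mu_{\alpha m}(z)=e^{-\alpha|z|^{2m}}dz$ on $\mathbf C^n$ and $L^p_{\alpha m}=L^p(\mathbf C^n,d\mu_{\alpha m})$. $K_{\beta m}(x,y)=\frac{m\beta^{n/m}}{\pi^n}\sum_{k\ge0}\frac{(\beta^{1/m}\langle x,y\rangle)^k}{k!}\frac{\Gamma(n+k)}{\Gamma(\frac{n+k}{m})}$ and $P_{\beta m}f(x)=\int f(y)K_{\beta m}(x,y)\,d\mu_{\beta m}(y)$ (the orthogonal projection of $L^2_{\beta m}$ onto its entire functions). "$P_{\beta m}$ is bounded from $L^p_{\alpha m}$ into $L^q_{\gamma m}$" means that $P_{\beta m}$, defined by this integral on $L^2_{\beta m}\cap L^p_{\alpha m}$, extends by continuity to a bounded operator $L^p_{\alpha m}\to L^q_{\gamma m}$. *)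

theory Defs
  imports "HOL-Analysis.Analysis"
begin

text \<open>Points of C^n are modelled as vectors of type complex^'n, n = CARD('n).
  The measure dz is Lebesgue measure lborel.\<close>

definition mu :: "real \<Rightarrow> real \<Rightarrow> (complex ^ ('n::finite)) measure" where
  "mu a m = density lborel (\<lambda>z. ennreal (exp (- a * norm z powr (2 * m))))"

definition cinner :: "complex ^ ('n::finite) \<Rightarrow> complex ^ ('n::finite) \<Rightarrow> complex" where
  "cinner x y = (\<Sum>j\<in>UNIV. x $ j * cnj (y $ j))"

definition inLp :: "real \<Rightarrow> real \<Rightarrow> real \<Rightarrow> (complex ^ ('n::finite) \<Rightarrow> complex) \<Rightarrow> bool" where
  "inLp p a m f \<longleftrightarrow> f \<in> borel_measurable lborel \<and>
      integrable (mu a m) (\<lambda>z. norm (f z) powr p)"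

definition Lpnorm :: "real \<Rightarrow> real \<Rightarrow> real \<Rightarrow> (complex ^ ('n::finite) \<Rightarrow> complex) \<Rightarrow> real" where
  "Lpnorm p a m f = (integral\<^sup>L (mu a m) (\<lambda>z. norm (f z) powr p)) powr (1 / p)"

definition kernel :: "real \<Rightarrow> real \<Rightarrow> complex ^ ('n::finite) \<Rightarrow> complex ^ ('n::finite) \<Rightarrow> complex" where
  "kernel b m x y =
     complex_of_real (m * b powr (real CARD('n) / m) / pi ^ CARD('n)) *
     (\<Sum>k. (complex_of_real (b powr (1 / m)) * cinner x y) ^ k / of_nat (fact k) *
           complex_of_real (Gamma (real CARD('n) + real k) /
                            Gamma ((real CARD('n) + real k) / m)))"

definition Proj :: "real \<Rightarrow> real \<Rightarrow> (complex ^ ('n::finite) \<Rightarrow> complex) \<Rightarrow> complex ^ ('n::finite) \<Rightarrow> complex" where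
  "Proj b m f x = integral\<^sup>L (mu b m) (\<lambda>y. f y * kernel b m x y)"

text \<open>P_{b m} is bounded from L^p_{a m} into L^q_{g m}: there is a constant C such that
  for every f in L^2_{b m} \<inter> L^p_{a m}, P f is measurable and
  ||P f||_{q,g} \<le> C ||f||_{p,a}  (so P extends by continuity from the dense subspace).\<close>
definition P_bounded :: "real \<Rightarrow> real \<Rightarrow> real \<Rightarrow> real \<Rightarrow> real \<Rightarrow> real \<Rightarrow> ('n::finite) itself \<Rightarrow> bool" where
  "P_bounded b m p a q g (_ :: ('n::finite) itself) \<longleftrightarrow>
     (\<exists>C. \<forall>f :: complex ^ ('n::finite) \<Rightarrow> complex.
        inLp 2 b m f \<and> inLp p a m f \<longrightarrow>
          Proj b m f \<in> borel_measurable lborel \<and>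
          (\<integral>\<^sup>+ z. ennreal (norm (Proj b m f z) powr q) \<partial>mu g m)
             \<le> ennreal ((C * Lpnorm p a m f) powr q))"

end

theory Submission
  imports Defs "HOL-Real_Asymp.Real_Asymp"
begin

text \<open>Test the boundedness on \<open>f = e\<^sup>b\<^sup>|\<^sup>y\<^sup>|\<^sup>2\<^sup>m \<one>\<^sub>B\<^sub>(\<^sub>R\<^sub>e\<^sub>,\<^sub>\<eta>\<^sub>)\<close>, a bump on a tiny ball around a
  point \<open>R e\<close> of a coordinate axis.  Then \<open>P f(x) = \<integral>\<^sub>B K(x,y) dy\<close>, and for \<open>x\<close> near \<open>T e\<close> with
  \<open>b\<^sup>1\<^sup>/\<^sup>m T R = (N/m)\<^sup>1\<^sup>/\<^sup>m\<close> the power series of \<open>K(x,y)\<close> in \<open>\<langle>x,y\<rangle>\<close> is dominated by its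
  \<open>N\<close>-th term, of size \<open>exp (N/m + O(log N))\<close>.  Comparing the resulting lower bound for
  \<open>\<parallel>P f\<parallel>\<^sub>q\<^sub>,\<^sub>g\<close> (the weight near \<open>T e\<close> costs \<open>exp(-g T\<^sup>2\<^sup>m)\<close>) with the upper bound for \<open>\<parallel>f\<parallel>\<^sub>p\<^sub>,\<^sub>a\<close>
  (weight \<open>exp((pb-a) R\<^sup>2\<^sup>m)\<close>) and optimising \<open>R, T\<close> gives, after taking logarithms, an inequality
  \<open>s N + O(log N) \<le> 0\<close> with \<open>s\<close> a positive multiple of \<open>q b\<^sup>2 - 4 g (b - a/p)\<close>.\<close>

lemma fact_upper_bound:
  assumes "j \<ge> 1"
  shows "fact j \<le> exp 1 * real j ^ (j+1) * exp (- real j)"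
  using assms
proof (induction j rule: dec_induct)
  case base
  then show ?case by (simp add: exp_minus)
next
  case (step j)
  have j: "real j \<ge> 1" using step by simp
  have l: "1 / (real j + 1) \<le> ln ((real j + 1) / real j)"
  proof -
    have "ln (real j / (real j + 1)) \<le> real j / (real j + 1) - 1"
      using j by (intro ln_le_minus_one) auto
    also have "\<dots> = - (1 / (real j + 1))" using j by (simp add: field_simps)
    finally show ?thesis using j by (simp add: ln_div)
  qed
  have "exp 1 \<le> exp ((real j + 1) * ln ((real j + 1) / real j))"
    using l j by (simp add: field_simps)
  also have "\<dots> = ((real j + 1) / real j) powr (real j + 1)"
    using j by (simp add: powr_def)
  also have "\<dots> = ((real j + 1) / real j) ^ (j+1)"
    using j by (subst powr_realpow[symmetric]) (auto simp: add.commute)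
  finally have e: "exp 1 * real j ^ (j+1) \<le> (real j + 1) ^ (j+1)"
    using j by (simp add: field_simps power_divide)
  have "fact (Suc j) = (real j + 1) * fact j" by simp
  also have "\<dots> \<le> (real j + 1) * (exp 1 * real j ^ (j+1) * exp (- real j))"
    using step by (intro mult_left_mono) auto
  also have "\<dots> = exp 1 * (exp 1 * real j ^ (j+1)) * (real j + 1) * exp (- real (Suc j))"
    by (simp add: exp_diff exp_minus field_simps)
  also have "\<dots> \<le> exp 1 * (real j + 1) ^ (j+1) * (real j + 1) * exp (- real (Suc j))"
    using e by (intro mult_right_mono mult_left_mono) auto
  also have "\<dots> = exp 1 * real (Suc j) ^ (Suc j + 1) * exp (- real (Suc j))"
    by (simp add: field_simps)
  finally show ?case .
qed

text \<open>From the single term \<open>j\<^sup>j/j!\<close> of the exponential series at \<open>j\<close>.\<close>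
lemma fact_lower_bound: "(real j / exp 1) ^ j \<le> fact j"
proof -
  have "real j ^ j / fact j \<le> exp (real j)"
  proof -
    have "(\<lambda>k. real j ^ k /\<^sub>R fact k) sums exp (real j)"
      by (rule exp_converges)
    hence s: "summable (\<lambda>k. real j ^ k / fact k)" and e: "exp (real j) = (\<Sum>k. real j ^ k / fact k)"
      by (auto simp: sums_iff divide_inverse mult.commute)
    have "sum (\<lambda>k. real j ^ k / fact k) {j} \<le> (\<Sum>k. real j ^ k / fact k)"
      by (rule sum_le_suminf[OF s]) auto
    thus ?thesis using e by simp
  qed
  hence "real j ^ j \<le> exp (real j) * fact j" by (simp add: divide_le_eq)
  thus ?thesis by (simp add: power_divide exp_of_nat_mult[symmetric] divide_le_eq mult.commute)
qed

lemma Gamma_of_nat_real: "j \<ge> 1 \<Longrightarrow> Gamma (real j) = fact (j - 1)"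
  using Gamma_fact[of "j - 1", where 'a=real] by (simp add: of_nat_diff)

lemma Gamma_mono_real: "(3/2::real) \<le> x \<Longrightarrow> x \<le> y \<Longrightarrow> Gamma x \<le> Gamma y"
proof (cases "x = y")
  case False
  assume "3/2 \<le> x" "x \<le> y"
  with False show ?thesis using Gamma_real_strict_mono[of x y] by auto
qed simp

text \<open>Upper bound for \<open>\<Gamma>(v)\<close> by rounding \<open>v\<close> up to an integer.\<close>
lemma Gamma_upper_bound:
  fixes v :: real assumes v: "v \<ge> 2"
  shows "Gamma v \<le> exp 1 * (v+1) powr (v+2) * exp (- v)"
proof -
  define j where "j = nat \<lceil>v\<rceil>"
  have jv: "v \<le> real j" "real j < v + 1" using v unfolding j_def by linarith+
  have j1: "j \<ge> 1" using jv v by linarith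
  have "Gamma v \<le> Gamma (real j)" using jv v by (intro Gamma_mono_real) auto
  also have "\<dots> = fact (j - 1)" using j1 by (rule Gamma_of_nat_real)
  also have "\<dots> \<le> (fact j :: real)" by (intro fact_mono) auto
  also have "\<dots> \<le> exp 1 * real j ^ (j+1) * exp (- real j)" using j1 by (rule fact_upper_bound)
  also have "\<dots> \<le> exp 1 * (v+1) powr (v+2) * exp (- v)"
  proof -
    have "real j ^ (j+1) = real j powr (real j + 1)"
      using j1 powr_realpow[of "real j" "j+1"] by (auto simp: add.commute)
    also have "\<dots> \<le> (v+1) powr (real j + 1)"
      using jv j1 by (intro powr_mono2) auto
    also have "\<dots> \<le> (v+1) powr (v+2)"
      using jv v by (intro powr_mono) auto
    finally have a: "real j ^ (j+1) \<le> (v+1) powr (v+2)" .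
    have b: "exp (- real j) \<le> exp (-v)" using jv by simp
    show ?thesis using a b by (intro mult_mono) auto
  qed
  finally show ?thesis .
qed

text \<open>Lower bound for \<open>\<Gamma>(v)\<close> by rounding \<open>v\<close> down to an integer.\<close>
lemma Gamma_lower_bound:
  fixes v :: real assumes v: "v \<ge> 5"
  shows "((v-2) / exp 1) powr (v-2) \<le> Gamma v"
proof -
  define j where "j = nat \<lfloor>v\<rfloor>"
  have jv: "real j \<le> v" "v < real j + 1" using v unfolding j_def by linarith+
  have j5: "j \<ge> 5" using jv v by linarith
  define t where "t = real (j - 1)"
  have t: "t = real j - 1" "v - 2 \<le> t" using j5 jv by (auto simp: t_def of_nat_diff)
  have e3: "exp 1 \<le> (3::real)" by (rule exp_le)
  have l3: "1 \<le> ln (v - 2)"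
  proof -
    have "exp 1 \<le> v - 2" using e3 v by linarith
    thus ?thesis using v by (subst ln_ge_iff) auto
  qed
  have "((v-2) / exp 1) powr (v-2) = exp ((v-2) * (ln (v-2) - 1))"
    using v by (simp add: powr_def ln_div)
  also have "\<dots> \<le> exp (t * (ln t - 1))"
  proof -
    have "(v-2) * (ln (v-2) - 1) \<le> t * (ln (v-2) - 1)"
      using t l3 by (intro mult_right_mono) auto
    also have "\<dots> \<le> t * (ln t - 1)"
      using t v by (intro mult_left_mono) auto
    finally show ?thesis by simp
  qed
  also have "\<dots> = (t / exp 1) ^ (j - 1)"
  proof -
    have "t > 0" using t v by linarith
    hence "(t / exp 1) ^ (j - 1) = (t / exp 1) powr (real (j - 1))"
      by (subst powr_realpow) auto
    also have "\<dots> = exp (t * (ln t - 1))"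
      using \<open>t > 0\<close> by (simp add: powr_def ln_div t_def mult.commute)
    finally show ?thesis by simp
  qed
  also have "\<dots> \<le> fact (j - 1)" unfolding t_def by (rule fact_lower_bound)
  also have "\<dots> = Gamma (real j)" using j5 by (simp add: Gamma_of_nat_real)
  also have "\<dots> \<le> Gamma v" using jv j5 by (intro Gamma_mono_real) auto
  finally show ?thesis .
qed

lemma fact_add_le: "(fact (k + n) :: real) \<le> fact k * real (k + n) ^ n"
proof (induction n)
  case (Suc n)
  have "(fact (k + Suc n) :: real) = real (k + Suc n) * fact (k + n)" by simp
  also have "\<dots> \<le> real (k + Suc n) * (fact k * real (k + n) ^ n)"
    using Suc by (intro mult_left_mono) auto
  also have "\<dots> \<le> real (k + Suc n) * (fact k * real (k + Suc n) ^ n)"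
    by (intro mult_left_mono power_mono) auto
  also have "\<dots> = fact k * real (k + Suc n) ^ Suc n" by simp
  finally show ?case .
qed simp

text \<open>The kernel is \<open>K\<^sub>b\<^sub>m(x,y) = c\<^sub>0 \<Sum>\<^sub>k kcoeff n m k (b\<^sup>1\<^sup>/\<^sup>m\<langle>x,y\<rangle>)\<^sup>k\<close> with the coefficients
  \<open>\<Gamma>(n+k) / (k! \<Gamma>((n+k)/m))\<close>.\<close>
definition kcoeff :: "nat \<Rightarrow> real \<Rightarrow> nat \<Rightarrow> real" where
  "kcoeff n m k = Gamma (real n + real k) / (fact k * Gamma ((real n + real k) / m))"

lemma kcoeff_pos: "n \<ge> 1 \<Longrightarrow> m > 0 \<Longrightarrow> kcoeff n m k > 0"
  unfolding kcoeff_def by (intro divide_pos_pos mult_pos_pos Gamma_real_pos) auto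

text \<open>Since \<open>\<Gamma>(n+k) \<le> k! (n+k)\<^sup>n\<close>, the coefficients decay like \<open>1/\<Gamma>((n+k)/m)\<close>.\<close>
lemma kcoeff_le:
  assumes "n \<ge> 1" "m > 0"
  shows "kcoeff n m k \<le> (real n + real k) ^ n / Gamma ((real n + real k) / m)"
proof -
  have G: "Gamma ((real n + real k) / m) > 0" using assms by (intro Gamma_real_pos) auto
  have "Gamma (real n + real k) = fact (n + k - 1)"
    using Gamma_of_nat_real[of "n+k"] assms by simp
  also have "\<dots> \<le> (fact (k + n) :: real)" by (intro fact_mono) auto
  also have "\<dots> \<le> fact k * (real n + real k) ^ n" using fact_add_le[of k n] by (simp add: add.commute)
  finally have "Gamma (real n + real k) \<le> fact k * (real n + real k) ^ n" .
  thus ?thesis unfolding kcoeff_def using G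
    by (simp add: field_simps)
qed

text \<open>Tail estimate for a single term: the \<open>k\<close>-th term is at most \<open>2\<^sup>-\<^sup>k\<close> for arguments up to
  \<open>2 (3k/m\<^sup>2)\<^sup>1\<^sup>/\<^sup>(\<^sup>2\<^sup>m\<^sup>)\<close>, provided \<open>k\<close> satisfies the growth condition \<open>growth\<close>, which makes
  \<open>\<Gamma>((n+k)/m) \<approx> exp((k/m) log k)\<close> dominate \<open>(n+k)\<^sup>n 4\<^sup>k (3k/m\<^sup>2)\<^sup>k\<^sup>/\<^sup>(\<^sup>2\<^sup>m\<^sup>)\<close>.\<close>
lemma kcoeff_term_small:
  fixes m s :: real and n k :: nat
  assumes m: "m > 0" and n: "n \<ge> 1" and k1: "real k \<ge> 1" and v5: "(real n + real k) / m \<ge> 5"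
    and growth: "real n * ln (real n + real k) + real k * ln 4 + real k / (2*m) * ln (3 * real k / m^2)
                   \<le> ((real n + real k) / m - 2) * ln (((real n + real k) / m - 2) / exp 1)"
    and s0: "0 \<le> s" and s1: "s \<le> 2 * (3 * real k / m^2) powr (1/(2*m))"
  shows "kcoeff n m k * s ^ k \<le> (1/2) ^ k"
proof -
  define v where "v = (real n + real k) / m"
  define W where "W = (3 * real k / m^2) powr (1/(2*m))"
  have G: "Gamma v > 0" using v5 by (auto simp: v_def)
  have W0: "W > 0" using k1 m by (auto simp: W_def)
  have "(real n + real k) ^ n = exp (real n * ln (real n + real k))"
    using n by (simp add: exp_of_nat_mult)
  moreover have "(4 * W) ^ k = exp (real k * ln 4 + real k / (2*m) * ln (3 * real k / m^2))"
  proof -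
    have "(4 * W) ^ k = exp (real k * ln (4 * W))"
      using W0 by (simp add: exp_of_nat_mult del: power_mult_distrib)
    moreover have "ln (4 * W) = ln 4 + 1/(2*m) * ln (3 * real k / m^2)"
      using W0 k1 m by (simp add: ln_mult W_def ln_powr)
    ultimately show ?thesis by (simp add: algebra_simps)
  qed
  ultimately have "(real n + real k) ^ n * (4 * W) ^ k
      = exp (real n * ln (real n + real k) + real k * ln 4 + real k / (2*m) * ln (3 * real k / m^2))"
    by (simp add: exp_add[symmetric] algebra_simps)
  also have "\<dots> \<le> exp ((v-2) * ln ((v-2) / exp 1))" using growth by (simp add: v_def)
  also have "\<dots> = ((v-2) / exp 1) powr (v-2)" using v5 by (simp add: v_def powr_def mult.commute)
  also have "\<dots> \<le> Gamma v" using v5 by (intro Gamma_lower_bound) (simp add: v_def)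
  finally have "(real n + real k) ^ n * (4 * W) ^ k \<le> Gamma v" .
  moreover have "(real n + real k) ^ n * (2 * s) ^ k \<le> (real n + real k) ^ n * (4 * W) ^ k"
    using s0 s1 by (intro mult_left_mono power_mono) (auto simp: W_def)
  ultimately have main: "(real n + real k) ^ n * (2 * s) ^ k \<le> Gamma v" by linarith
  have "kcoeff n m k * s ^ k \<le> (real n + real k) ^ n / Gamma v * s ^ k"
    using kcoeff_le[OF n m, of k] s0 by (intro mult_right_mono) (auto simp: v_def)
  also have "\<dots> = ((real n + real k) ^ n * (2 * s) ^ k / Gamma v) * (1/2) ^ k"
    by (simp add: power_mult_distrib field_simps)
  also have "\<dots> \<le> 1 * (1/2) ^ k"
    using main G by (intro mult_right_mono) auto
  finally show ?thesis by simp
qed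

text \<open>The growth hypothesis of the previous lemma holds for all large \<open>k\<close>.\<close>
lemma kcoeff_tail_bound:
  fixes m :: real assumes m: "m > 0" and n: "n \<ge> 1"
  shows "\<exists>K2. \<forall>k\<ge>K2. \<forall>s. 0 \<le> s \<and> s \<le> 2 * (3 * real k / m^2) powr (1/(2*m)) \<longrightarrow>
            kcoeff n m k * s ^ k \<le> (1/2) ^ k"
proof -
  define nn where "nn = real n"
  have nn: "nn \<ge> 1" using n by (simp add: nn_def)
  have "eventually (\<lambda>x::real. nn * ln (nn + x) + x * ln 4 + x / (2*m) * ln (3 * x / m^2)
       \<le> ((nn + x) / m - 2) * ln (((nn + x) / m - 2) / exp 1)) at_top"
    using m nn by real_asymp
  moreover have "eventually (\<lambda>x::real. (nn + x) / m \<ge> 5) at_top" using m nn by real_asymp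
  moreover have "eventually (\<lambda>x::real. x \<ge> 1) at_top" by real_asymp
  ultimately have "eventually (\<lambda>x::real. nn * ln (nn + x) + x * ln 4 + x / (2*m) * ln (3 * x / m^2)
       \<le> ((nn + x) / m - 2) * ln (((nn + x) / m - 2) / exp 1) \<and> (nn + x) / m \<ge> 5 \<and> x \<ge> 1) at_top"
    by eventually_elim auto
  then obtain X where X: "\<And>x. x \<ge> X \<Longrightarrow> nn * ln (nn + x) + x * ln 4 + x / (2*m) * ln (3 * x / m^2)
       \<le> ((nn + x) / m - 2) * ln (((nn + x) / m - 2) / exp 1) \<and> (nn + x) / m \<ge> 5 \<and> x \<ge> 1"
    unfolding eventually_at_top_linorder by blast
  show ?thesis
  proof (intro exI allI impI, elim conjE)
    fix k :: nat and s :: real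
    assume "nat \<lceil>X\<rceil> \<le> k" "0 \<le> s" "s \<le> 2 * (3 * real k / m^2) powr (1/(2*m))"
    moreover have "real k \<ge> X" using \<open>nat \<lceil>X\<rceil> \<le> k\<close> by linarith
    ultimately show "kcoeff n m k * s ^ k \<le> (1/2) ^ k"
      using X[of "real k"] by (intro kcoeff_term_small[OF m n]) (auto simp: nn_def)
  qed
qed

lemma kcoeff_summable:
  fixes m :: real assumes m: "m > 0" and n: "n \<ge> 1" and r: "r \<ge> 0"
  shows "summable (\<lambda>k. kcoeff n m k * r ^ k)"
proof -
  obtain K2 where K2: "\<And>k s. k \<ge> K2 \<Longrightarrow> 0 \<le> s \<Longrightarrow> s \<le> 2 * (3 * real k / m^2) powr (1/(2*m)) \<Longrightarrow>
            kcoeff n m k * s ^ k \<le> (1/2) ^ k"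
    using kcoeff_tail_bound[OF m n] by blast
  have "eventually (\<lambda>x::real. r \<le> 2 * (3 * x / m^2) powr (1/(2*m))) at_top"
    using m r by real_asymp
  then obtain X where X: "\<And>x. x \<ge> X \<Longrightarrow> r \<le> 2 * (3 * x / m^2) powr (1/(2*m))"
    unfolding eventually_at_top_linorder by blast
  show ?thesis
  proof (rule summable_comparison_test')
    show "summable (\<lambda>k. (1/2::real) ^ k)" by (rule summable_geometric) simp
    fix k :: nat assume "k \<ge> max K2 (nat \<lceil>X\<rceil>)"
    hence "k \<ge> K2" "real k \<ge> X" by linarith+
    then show "norm (kcoeff n m k * r ^ k) \<le> (1/2) ^ k"
      using K2[of k r] X[of "real k"] r kcoeff_pos[OF n m, of k] by auto
  qed
qed

text \<open>The \<open>N\<close>-th term at the argument \<open>(N/m)\<^sup>1\<^sup>/\<^sup>m\<close> is at least \<open>exp (peak_exponent n m N)\<close>, where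
  \<open>peak_exponent n m N = N/m + O(log N)\<close>: this is the size of the largest term of the series.\<close>
definition peak_exponent :: "nat \<Rightarrow> real \<Rightarrow> real \<Rightarrow> real" where
  "peak_exponent n m x = x / m * ln (x / m) + (real n + x) / m - 1
      - ((real n + x) / m + 2) * ln ((real n + x) / m + 1)"

lemma kcoeff_peak_lower:
  fixes m :: real and n N :: nat
  assumes m: "m > 0" and n: "n \<ge> 1" and v2: "(real n + real N) / m \<ge> 2"
  shows "exp (peak_exponent n m (real N)) \<le> kcoeff n m N * ((real N / m) powr (1/m)) ^ N"
proof -
  define v where "v = (real n + real N) / m"
  have G: "Gamma v > 0" using v2 by (auto simp: v_def)
  have A: "kcoeff n m N \<ge> 1 / Gamma v"
  proof -
    have "Gamma (real n + real N) = fact (n + N - 1)" using Gamma_of_nat_real[of "n+N"] n by simp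
    also have "(fact (n + N - 1) :: real) \<ge> fact N" by (intro fact_mono) (use n in auto)
    finally have "Gamma (real n + real N) \<ge> fact N" .
    thus ?thesis unfolding kcoeff_def v_def[symmetric] using G
      by (simp add: field_simps)
  qed
  have Gu: "Gamma v \<le> exp (1 + (v + 2) * ln (v + 1) - v)"
  proof -
    have "Gamma v \<le> exp 1 * (v+1) powr (v+2) * exp (- v)" using v2 by (intro Gamma_upper_bound) (auto simp: v_def)
    also have "\<dots> = exp (1 + (v + 2) * ln (v + 1) - v)"
      using v2 by (simp add: powr_def exp_add[symmetric] exp_diff v_def mult.commute)
    finally show ?thesis .
  qed
  have Z: "((real N / m) powr (1/m)) ^ N = exp (real N / m * ln (real N / m))"
  proof (cases "N = 0")
    case True thus ?thesis by simp
  next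
    case False
    hence "real N / m > 0" using m by auto
    hence "((real N / m) powr (1/m)) ^ N = ((real N / m) powr (1/m)) powr (real N)"
      using False by (subst powr_realpow) auto
    also have "\<dots> = (real N / m) powr (1/m * real N)" by (simp add: powr_powr)
    finally have "((real N / m) powr (1/m)) ^ N = (real N / m) powr (1/m * real N)" .
    thus ?thesis using \<open>real N / m > 0\<close> False m by (simp add: powr_def)
  qed
  have "exp (real N / m * ln (real N / m) + v - 1 - (v + 2) * ln (v + 1))
      = exp (real N / m * ln (real N / m)) / exp (1 + (v + 2) * ln (v + 1) - v)"
    by (simp add: exp_diff[symmetric] algebra_simps)
  also have "\<dots> \<le> exp (real N / m * ln (real N / m)) / Gamma v"
    using G Gu by (intro divide_left_mono) auto
  also have "\<dots> \<le> kcoeff n m N * exp (real N / m * ln (real N / m))"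
    using A by (simp add: divide_inverse mult.commute mult_left_mono)
  finally show ?thesis unfolding Z v_def peak_exponent_def by simp
qed

text \<open>The entire function \<open>E(w) = \<Sum>\<^sub>k c\<^sup>k kcoeff n m k w\<^sup>k\<close> behind the kernel.\<close>
definition kseries :: "nat \<Rightarrow> real \<Rightarrow> real \<Rightarrow> complex \<Rightarrow> complex" where
  "kseries n m c w = (\<Sum>k. complex_of_real (c ^ k * kcoeff n m k) * w ^ k)"

lemma kseries_summable:
  assumes m: "m > 0" and n: "n \<ge> 1" and c: "c \<ge> 0"
  shows "summable (\<lambda>k. complex_of_real (c ^ k * kcoeff n m k) * w ^ k)"
proof (rule summable_norm_cancel)
  have "summable (\<lambda>k. kcoeff n m k * (c * norm w) ^ k)"
    using c by (intro kcoeff_summable m n) auto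
  moreover have "norm (complex_of_real (c ^ k * kcoeff n m k) * w ^ k) = kcoeff n m k * (c * norm w) ^ k" for k
    using kcoeff_pos[OF n m, of k] c by (simp add: norm_mult norm_power power_mult_distrib abs_mult)
  ultimately show "summable (\<lambda>k. norm (complex_of_real (c ^ k * kcoeff n m k) * w ^ k))" by simp
qed

lemma kseries_isCont:
  assumes m: "m > 0" and n: "n \<ge> 1" and c: "c \<ge> 0"
  shows "isCont (kseries n m c) w"
  unfolding kseries_def[abs_def]
  by (rule isCont_powser_converges_everywhere) (rule kseries_summable[OF m n c])

lemma norm_pow_sub_one:
  fixes xi :: complex
  shows "norm ((1 + xi) ^ k - 1) \<le> (1 + norm xi) ^ k - 1"
proof (induction k)
  case (Suc k)
  have "(1 + xi) ^ Suc k - 1 = ((1 + xi) ^ k - 1) * (1 + xi) + xi" by (simp add: algebra_simps)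
  hence "norm ((1 + xi) ^ Suc k - 1) \<le> norm ((1 + xi) ^ k - 1) * norm (1 + xi) + norm xi"
    by (metis norm_mult norm_triangle_ineq)
  also have "\<dots> \<le> ((1 + norm xi) ^ k - 1) * (1 + norm xi) + norm xi"
  proof -
    have "norm (1 + xi) \<le> 1 + norm xi" using norm_triangle_ineq[of 1 xi] by simp
    thus ?thesis using Suc by (intro add_mono mult_mono) auto
  qed
  also have "\<dots> = (1 + norm xi) ^ Suc k - 1" by (simp add: algebra_simps)
  finally show ?case .
qed simp

text \<open>A numerical bound used to keep \<open>(1 + \<epsilon>)\<^sup>k \<le> 3/2\<close> when \<open>k \<epsilon> \<le> 1/3\<close>.\<close>
lemma exp_third: "exp (1/3::real) \<le> 3/2"
proof -
  have "exp (1/3::real) ^ 3 = exp 1" by (simp add: exp_of_nat_mult[symmetric])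
  also have "\<dots> \<le> 3" by (rule exp_le)
  also have "\<dots> \<le> (3/2::real) ^ 3" by (simp add: eval_nat_numeral)
  finally have "exp (1/3::real) ^ 3 \<le> (3/2) ^ 3" .
  thus ?thesis using power_le_imp_le_base[of "exp (1/3::real)" 2 "3/2"] by (simp add: numeral_3_eq_3)
qed

lemma Re_power_lower:
  fixes w :: complex and Z0 eps :: real
  assumes Z0: "Z0 > 0" and eps: "eps \<ge> 0" and w: "norm (w - of_real Z0) \<le> eps * Z0"
    and k: "real k * eps \<le> 1/3"
  shows "Re (w ^ k) \<ge> Z0 ^ k / 2"
proof -
  define xi where "xi = w / of_real Z0 - 1"
  have wx: "w = of_real Z0 * (1 + xi)" using Z0 by (simp add: xi_def field_simps)
  have nxi: "norm xi \<le> eps"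
  proof -
    have "xi = (w - of_real Z0) / of_real Z0" using Z0 by (simp add: xi_def field_simps)
    hence "norm xi = norm (w - of_real Z0) / Z0" using Z0 by (simp add: norm_divide)
    thus ?thesis using w Z0 by (simp add: divide_le_eq)
  qed
  have "(1 + norm xi) ^ k \<le> (1 + eps) ^ k" using nxi by (intro power_mono) auto
  also have "\<dots> \<le> exp eps ^ k" using eps by (intro power_mono) (auto simp: exp_ge_add_one_self add.commute)
  also have "\<dots> = exp (real k * eps)" by (simp add: exp_of_nat_mult)
  also have "\<dots> \<le> exp (1/3)" using k by simp
  also have "\<dots> \<le> 3/2" by (rule exp_third)
  finally have b: "(1 + norm xi) ^ k \<le> 3/2" .
  have "Re ((1 + xi) ^ k) = 1 + Re ((1 + xi) ^ k - 1)" by simp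
  also have "\<dots> \<ge> 1 - norm ((1 + xi) ^ k - 1)" using abs_Re_le_cmod[of "(1 + xi) ^ k - 1"] by linarith
  finally have "Re ((1 + xi) ^ k) \<ge> 1 - ((1 + norm xi) ^ k - 1)"
    using norm_pow_sub_one[of xi k] by linarith
  hence r: "Re ((1 + xi) ^ k) \<ge> 1/2" using b by linarith
  have "w ^ k = of_real (Z0 ^ k) * (1 + xi) ^ k" by (simp add: wx power_mult_distrib)
  hence "Re (w ^ k) = Z0 ^ k * Re ((1 + xi) ^ k)" by (simp add: Re_complex_of_real)
  moreover have "Z0 ^ k * (1/2) \<le> Z0 ^ k * Re ((1 + xi) ^ k)"
    using r Z0 by (intro mult_left_mono) auto
  ultimately show ?thesis by simp
qed

lemma suminf_tail_ge_neg_one: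
  fixes r :: "nat \<Rightarrow> real"
  assumes r: "summable r" and K: "K \<ge> 1" and tail: "\<And>j. - ((1/2) ^ K * (1/2) ^ j) \<le> r (j + K)"
  shows "-1 \<le> (\<Sum>j. r (j + K))"
proof -
  have sg: "summable (\<lambda>j. - ((1/2::real) ^ K * (1/2) ^ j))"
    by (intro summable_minus summable_mult summable_geometric) auto
  have "(\<Sum>j. - ((1/2::real) ^ K * (1/2) ^ j)) \<le> (\<Sum>j. r (j + K))"
    by (intro suminf_le sg tail summable_ignore_initial_segment r)
  moreover have "(\<Sum>j. - ((1/2::real) ^ K * (1/2) ^ j)) = - ((1/2) ^ K * 2)"
    by (subst suminf_minus) (auto intro!: summable_geometric simp: suminf_mult suminf_geometric)
  moreover obtain k where "K = Suc k" using K by (cases K) auto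
  hence "(1/2::real) ^ K \<le> 1/2" by (simp add: power_le_one)
  ultimately show ?thesis by linarith
qed

text \<open>Beyond the index \<open>N\<^sup>2\<close>, at an argument \<open>w\<close> with \<open>|w| \<le> 2Z\<^sub>0\<close>, the terms of \<open>E\<close> are at most
  \<open>2\<^sup>-\<^sup>k\<close>: then \<open>c|w| \<le> 2 (N/m)\<^sup>1\<^sup>/\<^sup>m\<close> lies in the range of the tail estimate.\<close>
lemma kseries_term_tail:
  fixes w :: complex and m c Z0 :: real and N k :: nat
  assumes m: "m > 0" and n: "n \<ge> 1" and c: "c > 0" and N: "N \<ge> 1" and Z0: "Z0 > 0"
    and tail: "\<And>k s. k \<ge> N^2 \<Longrightarrow> 0 \<le> s \<Longrightarrow> s \<le> 2 * (3 * real k / m^2) powr (1/(2*m)) \<Longrightarrow>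
            kcoeff n m k * s ^ k \<le> (1/2) ^ k"
    and cZ: "c * Z0 = (real N / m) powr (1/m)" and nw: "norm w \<le> 2 * Z0" and k: "N^2 \<le> k"
  shows "\<bar>c ^ k * kcoeff n m k * Re (w ^ k)\<bar> \<le> (1/2) ^ k"
proof -
  have s: "c * norm w \<le> 2 * (3 * real k / m^2) powr (1/(2*m))"
  proof -
    have "c * norm w \<le> 2 * (c * Z0)" using nw c by simp
    also have "c * Z0 = (real N / m) powr (2 * (1/(2*m)))" using cZ m by simp
    also have "\<dots> = ((real N / m) powr 2) powr (1/(2*m))" by (simp only: powr_powr)
    also have "\<dots> \<le> (3 * real k / m^2) powr (1/(2*m))"
    proof (intro powr_mono2)
      have "real N ^ 2 \<le> real k" using k by (metis of_nat_le_iff of_nat_power)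
      hence "real N ^ 2 \<le> 3 * real k" by linarith
      hence "real N ^ 2 / m^2 \<le> 3 * real k / m^2" using m by (intro divide_right_mono) auto
      thus "(real N / m) powr 2 \<le> 3 * real k / m^2" using m N by (simp add: power_divide)
    qed (use m in auto)
    finally show ?thesis by simp
  qed
  have "\<bar>c ^ k * kcoeff n m k * Re (w ^ k)\<bar> \<le> c ^ k * kcoeff n m k * norm w ^ k"
    using kcoeff_pos[OF n m, of k] c abs_Re_le_cmod[of "w^k"]
    by (simp add: abs_mult norm_power mult_left_mono)
  also have "\<dots> = kcoeff n m k * (c * norm w) ^ k" by (simp add: power_mult_distrib)
  also have "\<dots> \<le> (1/2) ^ k" using tail[OF k _ s] c by auto
  finally show ?thesis .
qed

text \<open>Domination by one term: if \<open>c Z\<^sub>0 = (N/m)\<^sup>1\<^sup>/\<^sup>m\<close> and \<open>w\<close> lies within relative distance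
  \<open>1/(3N\<^sup>2)\<close> of \<open>Z\<^sub>0\<close>, then the terms with \<open>k \<le> N\<^sup>2\<close> have positive real part, the tail beyond
  \<open>N\<^sup>2\<close> contributes at most \<open>1\<close>, and so \<open>Re E(w)\<close> is at least half the \<open>N\<close>-th term minus \<open>1\<close>.\<close>
lemma kseries_Re_lower:
  fixes w :: complex and m c Z0 :: real
  assumes m: "m > 0" and n: "n \<ge> 1" and c: "c > 0" and N: "N \<ge> 1" and Z0: "Z0 > 0"
    and tail: "\<And>k s. k \<ge> N^2 \<Longrightarrow> 0 \<le> s \<Longrightarrow> s \<le> 2 * (3 * real k / m^2) powr (1/(2*m)) \<Longrightarrow>
            kcoeff n m k * s ^ k \<le> (1/2) ^ k"
    and cZ: "c * Z0 = (real N / m) powr (1/m)"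
    and w: "norm (w - of_real Z0) \<le> Z0 / (3 * real N ^ 2)"
  shows "Re (kseries n m c w) \<ge> kcoeff n m N * (c * Z0) ^ N / 2 - 1"
proof -
  define t where "t k = complex_of_real (c ^ k * kcoeff n m k) * w ^ k" for k
  define r where "r k = c ^ k * kcoeff n m k * Re (w ^ k)" for k
  have st: "summable t" unfolding t_def using kseries_summable[OF m n] c by auto
  have rt: "r k = Re (t k)" for k by (simp add: r_def t_def)
  have sr: "summable r" unfolding rt[abs_def] by (rule summable_Re[OF st])
  have E: "Re (kseries n m c w) = suminf r"
    unfolding kseries_def t_def[symmetric] Re_suminf[OF st] rt[symmetric] ..
  define K where "K = N^2 + 1"
  have NK': "N < K" unfolding K_def using N by (simp add: power2_eq_square) (metis One_nat_def le_square less_Suc_eq_le)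
  have split: "suminf r = (\<Sum>j. r (j + K)) + sum r {..<K}"
    by (rule suminf_split_initial_segment[OF sr])
  have eps: "norm (w - of_real Z0) \<le> (1 / (3 * real N ^ 2)) * Z0" using w by simp
  have low: "r k \<ge> c ^ k * kcoeff n m k * (Z0 ^ k / 2)" if "k < K" for k
  proof -
    have "real k \<le> real N ^ 2" using that unfolding K_def by (metis Suc_eq_plus1 less_Suc_eq_le of_nat_le_iff of_nat_power)
    hence "real k * (1 / (3 * real N ^ 2)) \<le> 1/3" using N by (simp add: field_simps)
    hence "Re (w ^ k) \<ge> Z0 ^ k / 2" by (intro Re_power_lower[OF Z0 _ eps]) auto
    thus ?thesis unfolding r_def using kcoeff_pos[OF n m, of k] c by (intro mult_left_mono) auto
  qed
  have "c ^ N * kcoeff n m N * (Z0 ^ N / 2) \<le> r N" using low NK' by auto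
  also have "r N \<le> sum r {..<K}"
  proof (rule member_le_sum)
    fix x assume "x \<in> {..<K} - {N}"
    hence "x < K" by auto
    from low[OF this] show "0 \<le> r x" using kcoeff_pos[OF n m, of x] c Z0
      by (smt (verit) divide_nonneg_nonneg mult_nonneg_nonneg zero_le_power)
  qed (use NK' in auto)
  finally have head: "sum r {..<K} \<ge> kcoeff n m N * (c * Z0) ^ N / 2"
    by (simp add: power_mult_distrib field_simps)
  have nw: "norm w \<le> 2 * Z0"
  proof -
    have "norm w \<le> norm (w - of_real Z0) + Z0" using norm_triangle_ineq[of "w - of_real Z0" "of_real Z0"] Z0 by simp
    also have "\<dots> \<le> Z0 / (3 * real N ^ 2) + Z0" using w by simp
    also have "Z0 / (3 * real N ^ 2) \<le> Z0 / 1"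
    proof (intro divide_left_mono)
      have "real N ^ 2 \<ge> 1" using N by simp
      thus "1 \<le> 3 * real N ^ 2" by linarith
    qed (use Z0 N in auto)
    finally show ?thesis by simp
  qed
  have tailb: "r (j + K) \<ge> - ((1/2) ^ K * (1/2) ^ j)" for j
  proof -
    have "N^2 \<le> j + K" unfolding K_def by simp
    from kseries_term_tail[OF m n c N Z0 tail cZ nw this]
    have "\<bar>r (j + K)\<bar> \<le> (1/2) ^ (j + K)" unfolding r_def .
    thus ?thesis by (simp add: power_add abs_le_iff mult.commute)
  qed
  have "(\<Sum>j. r (j + K)) \<ge> -1" by (rule suminf_tail_ge_neg_one[OF sr _ tailb]) (simp add: K_def)
  thus ?thesis using E split head by linarith
qed

lemma kernel_eq:
  "kernel b m x y = complex_of_real (m * b powr (real CARD('n) / m) / pi ^ CARD('n)) *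
      kseries CARD('n) m (b powr (1/m)) (cinner x (y :: complex ^ ('n::finite)))"
  unfolding kernel_def kseries_def
proof (intro arg_cong[where f="\<lambda>s. _ * s"] suminf_cong)
  fix k
  show "(complex_of_real (b powr (1 / m)) * cinner x y) ^ k / of_nat (fact k) *
        complex_of_real (Gamma (real CARD('n) + real k) / Gamma ((real CARD('n) + real k) / m)) =
        complex_of_real ((b powr (1 / m)) ^ k * kcoeff CARD('n) m k) * cinner x y ^ k"
    unfolding kcoeff_def by (simp add: power_mult_distrib field_simps)
qed

lemma cinner_diff_left: "cinner (x - x') y = cinner x y - cinner x' y"
  unfolding cinner_def by (simp add: algebra_simps sum_subtractf)

lemma cinner_diff_right: "cinner x (y - y') = cinner x y - cinner x y'"
  unfolding cinner_def by (simp add: algebra_simps sum_subtractf)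

lemma norm_cinner: "norm (cinner x y) \<le> norm x * norm y"
proof -
  have "norm (cinner x y) \<le> (\<Sum>j\<in>UNIV. norm (x $ j) * norm (y $ j))"
    unfolding cinner_def by (rule order.trans[OF norm_sum]) (simp add: norm_mult)
  also have "\<dots> \<le> L2_set (\<lambda>j. norm (x $ j)) UNIV * L2_set (\<lambda>j. norm (y $ j)) UNIV"
    using L2_set_mult_ineq[of "\<lambda>j. norm (x $ j)" "\<lambda>j. norm (y $ j)" UNIV] by simp
  also have "\<dots> = norm x * norm y" by (simp add: norm_vec_def)
  finally show ?thesis .
qed

lemma cinner_axis: "cinner (T *\<^sub>R axis i (1::complex)) (R *\<^sub>R axis i 1) = complex_of_real (T * R)"
proof -
  have e: "(T *\<^sub>R axis i (1::complex)) $ j = (if j = i then complex_of_real T else 0)" for T j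
    by (simp only: vector_scaleR_component) (simp add: axis_def scaleR_conv_of_real)
  show ?thesis unfolding cinner_def e by (simp add: if_distrib cong: if_cong)
qed

lemma norm_axis: "norm (axis i (1::complex)) = 1"
  by (simp add: inner_axis' norm_eq_1)

lemma cinner_near_axis:
  fixes x y :: "complex ^ ('n::finite)"
  assumes "x \<in> ball (T *\<^sub>R axis i 1) eta" "y \<in> ball (R *\<^sub>R axis i 1) eta" "T \<ge> 0" "R \<ge> 0"
  shows "norm (cinner x y - of_real (T * R)) \<le> eta * (R + eta) + T * eta"
proof -
  let ?e = "axis i (1::complex)"
  have "cinner x y - of_real (T * R) = cinner (x - T *\<^sub>R ?e) y + cinner (T *\<^sub>R ?e) (y - R *\<^sub>R ?e)"
    by (simp add: cinner_diff_left cinner_diff_right cinner_axis)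
  hence "norm (cinner x y - of_real (T * R)) \<le> norm (x - T *\<^sub>R ?e) * norm y + norm (T *\<^sub>R ?e) * norm (y - R *\<^sub>R ?e)"
  proof -
    have "norm (cinner (x - T *\<^sub>R ?e) y + cinner (T *\<^sub>R ?e) (y - R *\<^sub>R ?e))
       \<le> norm (cinner (x - T *\<^sub>R ?e) y) + norm (cinner (T *\<^sub>R ?e) (y - R *\<^sub>R ?e))"
      by (rule norm_triangle_ineq)
    also have "\<dots> \<le> norm (x - T *\<^sub>R ?e) * norm y + norm (T *\<^sub>R ?e) * norm (y - R *\<^sub>R ?e)"
      by (intro add_mono norm_cinner)
    finally show ?thesis using \<open>cinner x y - of_real (T * R) = _\<close> by simp
  qed
  also have "\<dots> \<le> eta * (R + eta) + T * eta"
  proof (intro add_mono mult_mono)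
    show "norm (x - T *\<^sub>R ?e) \<le> eta" using assms(1) by (simp add: dist_norm norm_minus_commute)
    show "norm y \<le> R + eta"
      using assms(2) norm_triangle_ineq[of "y - R *\<^sub>R ?e" "R *\<^sub>R ?e"] assms(4)
      by (simp add: dist_norm norm_minus_commute norm_axis)
    show "norm (T *\<^sub>R ?e) \<le> T" using assms(3) by (simp add: norm_axis)
    show "norm (y - R *\<^sub>R ?e) \<le> eta" using assms(2) by (simp add: dist_norm norm_minus_commute)
  qed (use assms in \<open>auto simp: dist_norm intro: order.trans[OF norm_ge_zero less_imp_le]\<close>)
  finally show ?thesis .
qed

lemma cinner_near_peak:
  fixes x y :: "complex ^ ('n::finite)" and i :: 'n and N :: nat and R T eta :: real
  assumes N: "N \<ge> 1" and R: "R > 0" and T: "T > 0"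
    and etaR: "12 * real N^2 * eta \<le> R" and etaT: "12 * real N^2 * eta \<le> T"
    and x: "x \<in> ball (T *\<^sub>R axis i 1) eta" and y: "y \<in> ball (R *\<^sub>R axis i 1) eta"
  shows "norm (cinner x y - of_real (T * R)) \<le> (T * R) / (3 * real N ^ 2)"
proof -
  from x have "dist (T *\<^sub>R axis i 1) x < eta" by simp
  hence eta0: "eta \<ge> 0" by (smt (verit) zero_le_dist)
  define u where "u = T * R / (12 * real N ^ 2)"
  have N2: "real N ^ 2 \<ge> 1" using N by simp
  have "0 < 12 * real N ^ 2" using N2 by linarith
  hence eR: "eta \<le> R / (12 * real N ^ 2)" and eT: "eta \<le> T / (12 * real N ^ 2)"
    using etaR etaT by (simp_all add: pos_le_divide_eq mult.commute)
  have "eta * R \<le> T / (12 * real N ^ 2) * R" using eT R by (intro mult_right_mono) auto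
  hence u1: "eta * R \<le> u" unfolding u_def by simp
  have "T * eta \<le> T * (R / (12 * real N ^ 2))" using eR T by (intro mult_left_mono) auto
  hence u3: "T * eta \<le> u" unfolding u_def by simp
  have "eta \<le> 12 * real N ^ 2 * eta" using mult_right_mono[of 1 "12 * real N ^ 2" eta] N2 eta0 by simp
  hence "eta * eta \<le> eta * R" using etaR eta0 by (intro mult_left_mono) auto
  moreover have "0 \<le> u" unfolding u_def using T R by simp
  ultimately have "eta * (R + eta) + T * eta \<le> 4 * u" using u1 u3 unfolding distrib_left by linarith
  moreover have "norm (cinner x y - of_real (T * R)) \<le> eta * (R + eta) + T * eta"
    using cinner_near_axis[of x T i eta y R] x y T R by auto
  moreover have "4 * u = T * R / (3 * real N ^ 2)" unfolding u_def by simp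
  ultimately show ?thesis by linarith
qed

lemma cinner_cont: "continuous_on UNIV (\<lambda>y. cinner x (y :: complex^('n::finite)))"
  unfolding cinner_def by (intro continuous_intros)

lemma kernel_cont:
  assumes m: "m > 0"
  shows "continuous_on UNIV (\<lambda>y. kernel b m x (y :: complex^('n::finite)))"
proof -
  have n: "CARD('n) \<ge> 1" by (simp add: Suc_le_eq)
  have E: "continuous_on UNIV (kseries CARD('n) m (b powr (1/m)))"
    by (intro continuous_at_imp_continuous_on ballI kseries_isCont m n) auto
  show ?thesis unfolding kernel_eq
    by (intro continuous_intros continuous_on_compose2[OF E cinner_cont]) auto
qed

lemma continuous_norm_powr: "m > 0 \<Longrightarrow> continuous_on UNIV (\<lambda>z::complex^('n::finite). norm z powr (2*m))"
  by (intro continuous_on_powr' continuous_intros) auto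

lemma measurable_norm_powr: "m > 0 \<Longrightarrow> (\<lambda>z::complex^('n::finite). norm z powr (2*m)) \<in> borel_measurable lborel"
  using borel_measurable_continuous_onI[OF continuous_norm_powr] by simp

lemma measurable_density: "m > 0 \<Longrightarrow> (\<lambda>z::complex^('n::finite). exp (- a * norm z powr (2*m))) \<in> borel_measurable lborel"
  using measurable_norm_powr[of m] by measurable

lemma mu_integral:
  fixes g :: "complex^('n::finite) \<Rightarrow> 'b::{banach, second_countable_topology}"
  assumes "m > 0" "g \<in> borel_measurable lborel"
  shows "integral\<^sup>L (mu a m) g = integral\<^sup>L lborel (\<lambda>z. exp (- a * norm z powr (2*m)) *\<^sub>R g z)"
  unfolding mu_def by (rule integral_density) (use assms measurable_density in auto)

lemma mu_integrable:
  fixes g :: "complex^('n::finite) \<Rightarrow> 'b::{banach, second_countable_topology}"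
  assumes "m > 0" "g \<in> borel_measurable lborel"
  shows "integrable (mu a m) g \<longleftrightarrow> integrable lborel (\<lambda>z. exp (- a * norm z powr (2*m)) *\<^sub>R g z)"
  unfolding mu_def by (rule integrable_density) (use assms measurable_density in auto)

lemma mu_nn_integral:
  fixes g :: "complex^('n::finite) \<Rightarrow> ennreal"
  assumes "m > 0" "g \<in> borel_measurable lborel"
  shows "(\<integral>\<^sup>+ z. g z \<partial>mu a m) = (\<integral>\<^sup>+ z. ennreal (exp (- a * norm z powr (2*m))) * g z \<partial>lborel)"
  unfolding mu_def by (rule nn_integral_density) (use assms measurable_density in auto)

lemma integrable_indicator_ball:
  fixes h :: "complex^('n::finite) \<Rightarrow> 'b::{banach, second_countable_topology}"
  assumes h: "continuous_on UNIV h"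
  shows "integrable lborel (\<lambda>z. indicator (ball c r) z *\<^sub>R h z)"
proof -
  have "compact (h ` cball c r)" by (intro compact_continuous_image continuous_on_subset[OF h]) auto
  then obtain M where M: "\<And>z. z \<in> cball c r \<Longrightarrow> norm (h z) \<le> M"
    by (meson bounded_iff compact_imp_bounded image_eqI)
  have hm: "h \<in> borel_measurable lborel" using borel_measurable_continuous_onI[OF h] by simp
  show ?thesis
  proof (rule integrableI_bounded_set[where A="cball c r" and B=M])
    show "(\<lambda>z. indicator (ball c r) z *\<^sub>R h z) \<in> borel_measurable lborel"
      by (intro borel_measurable_scaleR borel_measurable_indicator hm) auto
    show "emeasure lborel (cball c r) < \<infinity>" by (rule emeasure_lborel_cball_finite)
    show "AE x in lborel. x \<in> cball c r \<longrightarrow> norm (indicator (ball c r) x *\<^sub>R h x) \<le> M"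
      using M by (auto simp: indicator_def intro: order.trans[OF norm_ge_zero])
    show "AE x in lborel. x \<notin> cball c r \<longrightarrow> indicator (ball c r) x *\<^sub>R h x = 0"
      by (auto simp: indicator_def)
  qed auto
qed

lemma ball_borel[measurable]: "ball (c::'a::metric_space) r \<in> sets borel" by simp

text \<open>The factor \<open>e\<^sup>b\<^sup>|\<^sup>y\<^sup>|\<^sup>2\<^sup>m\<close> cancels the
  weight of \<open>\<mu>\<^sub>b\<^sub>m\<close>, so that \<open>P f(x) = \<integral>\<^sub>B K(x,y) dy\<close>.\<close>
definition test_fun :: "complex^('n::finite) \<Rightarrow> real \<Rightarrow> real \<Rightarrow> real \<Rightarrow> complex^'n \<Rightarrow> complex" where
  "test_fun c r b m y = complex_of_real (exp (b * norm y powr (2*m)) * indicator (ball c r) y)"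

lemma test_fun_measurable: assumes "m > 0" shows "test_fun c r b m \<in> borel_measurable lborel"
proof -
  have "(\<lambda>z::complex^'n. norm z powr (2*m)) \<in> borel_measurable lborel" using measurable_norm_powr assms by blast
  thus ?thesis unfolding test_fun_def[abs_def] by measurable
qed

lemma norm_test_fun_powr:
  assumes "p > 0"
  shows "norm (test_fun c r b m y) powr p = indicator (ball c r) y * exp (p * b * norm y powr (2*m))"
  using assms by (auto simp: test_fun_def indicator_def powr_def)

lemma test_fun_inLp:
  assumes m: "m > 0" and p: "p > 0"
  shows "inLp p a m (test_fun c r b m)"
  unfolding inLp_def
proof
  show "test_fun c r b m \<in> borel_measurable lborel" by (rule test_fun_measurable[OF m])
  have meas: "(\<lambda>z. norm (test_fun c r b m z) powr p) \<in> borel_measurable lborel"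
    using test_fun_measurable[OF m, of c r b] by measurable
  have eq: "(\<lambda>z. exp (- a * norm z powr (2*m)) *\<^sub>R (norm (test_fun c r b m z) powr p)) =
        (\<lambda>z. indicator (ball c r) z *\<^sub>R exp ((p * b - a) * norm z powr (2*m)))"
    by (auto simp: norm_test_fun_powr[OF p] indicator_def exp_add[symmetric] algebra_simps)
  have "integrable lborel (\<lambda>z. indicator (ball c r) z *\<^sub>R exp ((p * b - a) * norm z powr (2*m)))"
    by (intro integrable_indicator_ball continuous_intros continuous_norm_powr m)
  thus "integrable (mu a m) (\<lambda>z. norm (test_fun c r b m z) powr p)"
    by (subst mu_integrable[OF m meas]) (simp only: eq)
qed

lemma test_fun_Lpnorm:
  assumes m: "m > 0" and p: "p > 0"
    and M: "\<And>y. y \<in> ball c r \<Longrightarrow> (p * b - a) * norm y powr (2*m) \<le> M"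
  shows "Lpnorm p a m (test_fun c r b m) \<le> (measure lborel (ball c r) * exp M) powr (1/p)"
proof -
  have meas: "(\<lambda>z. norm (test_fun c r b m z) powr p) \<in> borel_measurable lborel"
    using test_fun_measurable[OF m, of c r b] by measurable
  have eq: "(\<lambda>z. exp (- a * norm z powr (2*m)) *\<^sub>R (norm (test_fun c r b m z) powr p)) =
        (\<lambda>z. indicator (ball c r) z *\<^sub>R exp ((p * b - a) * norm z powr (2*m)))"
    by (auto simp: norm_test_fun_powr[OF p] indicator_def exp_add[symmetric] algebra_simps)
  have I: "integral\<^sup>L (mu a m) (\<lambda>z. norm (test_fun c r b m z) powr p) =
      integral\<^sup>L lborel (\<lambda>z. indicator (ball c r) z *\<^sub>R exp ((p * b - a) * norm z powr (2*m)))"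
    by (subst mu_integral[OF m meas]) (simp only: eq)
  have int1: "integrable lborel (\<lambda>z. indicator (ball c r) z *\<^sub>R exp ((p * b - a) * norm z powr (2*m)))"
    by (intro integrable_indicator_ball continuous_intros continuous_norm_powr m)
  have int2: "integrable lborel (\<lambda>z. indicator (ball c r) z *\<^sub>R exp M)"
    by (intro integrable_indicator_ball continuous_intros)
  have "integral\<^sup>L lborel (\<lambda>z. indicator (ball c r) z *\<^sub>R exp ((p * b - a) * norm z powr (2*m)))
      \<le> integral\<^sup>L lborel (\<lambda>z. indicator (ball c r) z *\<^sub>R exp M)"
    using M by (intro integral_mono int1 int2) (auto simp: indicator_def)
  also have "\<dots> = measure lborel (ball c r) * exp M"
    by (simp add: integral_indicator emeasure_lborel_ball_finite)
  finally have le: "integral\<^sup>L (mu a m) (\<lambda>z. norm (test_fun c r b m z) powr p) \<le> measure lborel (ball c r) * exp M"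
    using I by simp
  have nn: "0 \<le> integral\<^sup>L (mu a m) (\<lambda>z. norm (test_fun c r b m z) powr p)" by simp
  show ?thesis unfolding Lpnorm_def using le nn p by (intro powr_mono2) auto
qed

lemma Proj_test_fun_lower:
  fixes x c :: "complex^('n::finite)"
  assumes m: "m > 0" and Kmin: "\<And>y. y \<in> ball c r \<Longrightarrow> Kmin \<le> Re (kernel b m x y)"
  shows "Kmin * measure lborel (ball c r) \<le> norm (Proj b m (test_fun c r b m) x)"
proof -
  define K where "K y = kernel b m x y" for y
  have contK: "continuous_on UNIV K" unfolding K_def[abs_def] by (rule kernel_cont[OF m])
  have mK: "K \<in> borel_measurable lborel" using borel_measurable_continuous_onI[OF contK] by simp
  have mprod: "(\<lambda>y. test_fun c r b m y * K y) \<in> borel_measurable lborel"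
    using test_fun_measurable[OF m, of c r b] mK by measurable
  have "Proj b m (test_fun c r b m) x = integral\<^sup>L lborel (\<lambda>y. exp (- b * norm y powr (2*m)) *\<^sub>R (test_fun c r b m y * K y))"
    unfolding Proj_def K_def[symmetric] by (rule mu_integral[OF m mprod])
  also have "\<dots> = integral\<^sup>L lborel (\<lambda>y. indicator (ball c r) y *\<^sub>R K y)"
  proof (intro Bochner_Integration.integral_cong refl)
    fix y :: "complex^'n"
    have "exp (- b * norm y powr (2*m)) * exp (b * norm y powr (2*m)) = 1"
      by (simp add: exp_add[symmetric])
    thus "exp (- b * norm y powr (2*m)) *\<^sub>R (test_fun c r b m y * K y) = indicator (ball c r) y *\<^sub>R K y"
      unfolding test_fun_def scaleR_conv_of_real
      by (simp add: indicator_def mult.assoc[symmetric] of_real_mult[symmetric] del: of_real_mult)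
  qed
  finally have P: "Proj b m (test_fun c r b m) x = integral\<^sup>L lborel (\<lambda>y. indicator (ball c r) y *\<^sub>R K y)" .
  have intK: "integrable lborel (\<lambda>y. indicator (ball c r) y *\<^sub>R K y)"
    by (rule integrable_indicator_ball[OF contK])
  have "Re (Proj b m (test_fun c r b m) x) = integral\<^sup>L lborel (\<lambda>y. Re (indicator (ball c r) y *\<^sub>R K y))"
    unfolding P by (rule integral_Re[OF intK, symmetric])
  also have "\<dots> = integral\<^sup>L lborel (\<lambda>y. indicator (ball c r) y *\<^sub>R Re (K y))"
    by (simp add: scaleR_conv_of_real)
  also have "\<dots> \<ge> integral\<^sup>L lborel (\<lambda>y. indicator (ball c r) y *\<^sub>R Kmin)"
  proof (intro integral_mono)
    show "integrable lborel (\<lambda>y. indicator (ball c r) y *\<^sub>R Kmin)"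
      by (intro integrable_indicator_ball continuous_intros)
    have "continuous_on UNIV (\<lambda>y. Re (K y))" by (intro continuous_intros contK)
    thus "integrable lborel (\<lambda>y. indicator (ball c r) y *\<^sub>R Re (K y))"
      by (rule integrable_indicator_ball)
    fix y show "indicator (ball c r) y *\<^sub>R Kmin \<le> indicator (ball c r) y *\<^sub>R Re (K y)"
      using Kmin by (auto simp: indicator_def K_def)
  qed
  also have "integral\<^sup>L lborel (\<lambda>y. indicator (ball c r) y *\<^sub>R Kmin) = Kmin * measure lborel (ball c r)"
    by (simp add: integral_indicator emeasure_lborel_ball_finite)
  finally show ?thesis using complex_Re_le_cmod[of "Proj b m (test_fun c r b m) x"] by linarith
qed

lemma weighted_Lq_lower_on_ball:
  fixes P :: "complex^('n::finite) \<Rightarrow> complex" and c :: "complex^'n"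
  assumes m: "m > 0" and g: "g \<ge> 0" and q: "q > 0" and meas: "P \<in> borel_measurable lborel"
    and P0: "P0 \<ge> 0"
    and bnd: "\<And>x. x \<in> ball c r \<Longrightarrow> P0 \<le> norm (P x) \<and> norm x powr (2*m) \<le> Q"
  shows "ennreal (measure lborel (ball c r) * exp (- g * Q) * P0 powr q)
           \<le> (\<integral>\<^sup>+ x. ennreal (norm (P x) powr q) \<partial>mu g m)"
proof -
  have mP: "(\<lambda>x. ennreal (norm (P x) powr q)) \<in> borel_measurable lborel" using meas by measurable
  have "ennreal (measure lborel (ball c r) * exp (- g * Q) * P0 powr q)
      = ennreal (exp (- g * Q) * P0 powr q) * emeasure lborel (ball c r)"
  proof -
    have em: "emeasure lborel (ball c r) = ennreal (measure lborel (ball c r))"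
      using emeasure_lborel_ball_finite[of c r] by (simp add: emeasure_eq_ennreal_measure top.not_eq_extremum)
    show ?thesis unfolding em using P0 by (subst ennreal_mult[symmetric]) (auto simp: mult_ac)
  qed
  also have "\<dots> = (\<integral>\<^sup>+ x. ennreal (exp (- g * Q) * P0 powr q) * indicator (ball c r) x \<partial>lborel)"
    by (simp add: nn_integral_cmult_indicator)
  also have "\<dots> \<le> (\<integral>\<^sup>+ x. ennreal (exp (- g * norm x powr (2*m))) * ennreal (norm (P x) powr q) \<partial>lborel)"
  proof (intro nn_integral_mono)
    fix x
    show "ennreal (exp (- g * Q) * P0 powr q) * indicator (ball c r) x
          \<le> ennreal (exp (- g * norm x powr (2*m))) * ennreal (norm (P x) powr q)"
    proof (cases "x \<in> ball c r")
      case True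
      from bnd[OF True] have b1: "P0 \<le> norm (P x)" and b2: "norm x powr (2*m) \<le> Q" by auto
      have e: "exp (- g * Q) \<le> exp (- g * norm x powr (2*m))"
        using g b2 by (simp add: mult_left_mono)
      have pq: "P0 powr q \<le> norm (P x) powr q" using b1 P0 q by (intro powr_mono2) auto
      have "exp (- g * Q) * P0 powr q \<le> exp (- g * norm x powr (2*m)) * norm (P x) powr q"
        using e pq by (intro mult_mono) auto
      thus ?thesis using True by (simp add: ennreal_mult[symmetric])
    qed simp
  qed
  also have "\<dots> = (\<integral>\<^sup>+ x. ennreal (norm (P x) powr q) \<partial>mu g m)"
    by (rule mu_nn_integral[OF m mP, symmetric])
  finally show ?thesis .
qed

lemma exp_le_one_plus_twice: "0 \<le> x \<Longrightarrow> x \<le> 1/2 \<Longrightarrow> exp x \<le> 1 + 2 * (x::real)"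
proof -
  assume x: "0 \<le> x" "x \<le> 1/2"
  have "1 - x \<le> exp (-x)" using exp_ge_add_one_self[of "-x"] by simp
  hence "exp x * (1 - x) \<le> exp x * exp (-x)" by (intro mult_left_mono) auto
  hence "exp x * (1 - x) \<le> 1" by (simp add: exp_minus)
  hence "exp x \<le> 1 / (1 - x)" using x by (simp add: field_simps)
  also have "\<dots> \<le> 1 + 2 * x" using x by (simp add: field_simps) (use mult_left_mono[of "x*2" 1 x] in simp)
  finally show ?thesis .
qed

lemma powr_perturb_up:
  fixes X h r :: real
  assumes X: "X > 0" and r: "r > 0" and h: "h \<ge> 0" and small: "r * h / X \<le> 1/2"
  shows "(X + h) powr r \<le> X powr r * (1 + 2 * r * h / X)"
proof -
  have "X + h = X * (1 + h / X)" using X by (simp add: field_simps)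
  moreover have pos: "1 + h / X > 0" using X h by (metis add_pos_nonneg divide_nonneg_pos zero_less_one)
  ultimately have "(X + h) powr r = X powr r * (1 + h / X) powr r" using X by (simp add: powr_mult)
  also have "(1 + h / X) powr r = exp (r * ln (1 + h / X))" using pos by (simp add: powr_def)
  also have "\<dots> \<le> exp (r * (h / X))"
    using X h r by (intro exp_mono mult_left_mono ln_add_one_self_le_self) auto
  also have "\<dots> \<le> 1 + 2 * (r * (h / X))"
    using X h r small by (intro exp_le_one_plus_twice) auto
  finally show ?thesis using X by (simp add: mult_left_mono mult.assoc)
qed

lemma powr_perturb_down:
  fixes X h r :: real
  assumes X: "X > 0" and r: "r > 0" and h: "h \<ge> 0" and hX: "h \<le> X / 2" and small: "r * h / X \<le> 1/2"
  shows "X powr r * (1 - 2 * r * h / X) \<le> (X - h) powr r"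
proof -
  define t where "t = h / X"
  have t: "0 \<le> t" "t \<le> 1/2" using X h hX by (auto simp: t_def field_simps)
  have "X - h = X * (1 - t)" using X by (simp add: t_def field_simps)
  hence eq: "(X - h) powr r = X powr r * (1 - t) powr r" using X t by (simp add: powr_mult)
  have lnl: "ln (1 - t) \<ge> -2 * t"
  proof -
    have "ln (1 / (1 - t)) \<le> 1 / (1 - t) - 1" using t by (intro ln_le_minus_one) auto
    hence "- ln (1 - t) \<le> t / (1 - t)" using t by (simp add: ln_div field_simps)
    also have "\<dots> \<le> 2 * t" using t by (simp add: field_simps) (use mult_left_mono[of "t*2" 1 t] in simp)
    finally show ?thesis by simp
  qed
  have "1 - 2 * r * t \<le> exp (-2 * r * t)" using exp_ge_add_one_self[of "-2*r*t"] by simp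
  also have "\<dots> \<le> exp (r * ln (1 - t))"
  proof -
    have "r * (-2 * t) \<le> r * ln (1 - t)" using lnl r by (intro mult_left_mono) auto
    thus ?thesis by (simp add: algebra_simps)
  qed
  also have "\<dots> = (1 - t) powr r" using t by (simp add: powr_def)
  finally have "1 - 2 * r * t \<le> (1 - t) powr r" .
  hence "X powr r * (1 - 2 * r * t) \<le> X powr r * (1 - t) powr r" by (intro mult_left_mono) auto
  thus ?thesis unfolding eq by (simp add: t_def)
qed

text \<open>Real powers are insensitive to the sign of the base (\<open>ln\<close> is even on the reals).\<close>
lemma powr_abs_base: "(x::real) powr q = \<bar>x\<bar> powr q"
  unfolding powr_def ln_real_def by simp

lemma mult_le_of_abs_diff_le:
  fixes c t t0 e :: real
  assumes "\<bar>t - t0\<bar> \<le> e"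
  shows "c * t \<le> c * t0 + \<bar>c\<bar> * e"
proof -
  have "c * (t - t0) \<le> \<bar>c\<bar> * \<bar>t - t0\<bar>" by (metis abs_ge_self abs_mult)
  also have "\<dots> \<le> \<bar>c\<bar> * e" using assms by (intro mult_left_mono) auto
  finally show ?thesis by (simp add: algebra_simps)
qed

lemma norm_powr_on_small_ball:
  fixes y z :: "'a::real_normed_vector" and N m S eta :: real
  assumes z: "norm z = S" and S: "S > 0" and m: "m > 0" and N: "1 \<le> N" "m \<le> N"
    and eta: "12 * N^2 * eta \<le> S" and "y \<in> ball z eta"
  shows "\<bar>norm y powr (2*m) - S powr (2*m)\<bar> \<le> S powr (2*m) / (3*N)"
proof -
  from \<open>y \<in> ball z eta\<close> have y: "norm (y - z) < eta" by (simp add: dist_norm norm_minus_commute)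
  define d where "d = 2 * (2*m) * eta / S"
  have eta0: "0 \<le> eta" using y norm_ge_zero[of "y - z"] by linarith
  have "eta / S \<le> 1 / (12 * N^2)" using eta S N by (simp add: field_simps)
  hence "4 * m * (eta / S) \<le> 4 * m * (1 / (12 * N^2))" using m by (intro mult_left_mono) auto
  hence "d \<le> 4 * m / (12 * N^2)" unfolding d_def by simp
  also have "\<dots> \<le> 1 / (3 * N)" using N m by (simp add: field_simps power2_eq_square mult_right_mono)
  finally have d: "d \<le> 1 / (3 * N)" .
  have small: "2 * m * eta / S \<le> 1/2"
  proof -
    have "1 / (3 * N) \<le> 1" using N by simp
    thus ?thesis using d unfolding d_def by simp
  qed
  have "1 \<le> N^2" using N(1) by (rule one_le_power)
  hence "2 \<le> 12 * N^2" by linarith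
  hence "2 * eta \<le> 12 * N^2 * eta" using eta0 by (rule mult_right_mono)
  hence half: "eta \<le> S / 2" using eta by linarith
  have lo: "S - eta \<le> norm y" and hi: "norm y \<le> S + eta"
    using norm_triangle_ineq2[of z y] norm_triangle_ineq[of z "y - z"] y z
    by (auto simp: norm_minus_commute)
  have "norm y powr (2*m) \<le> (S + eta) powr (2*m)" using hi m by (intro powr_mono2) auto
  also have "\<dots> \<le> S powr (2*m) * (1 + d)"
    unfolding d_def using S m eta0 small by (intro powr_perturb_up) auto
  finally have up: "norm y powr (2*m) \<le> S powr (2*m) * (1 + d)" .
  have "S powr (2*m) * (1 - d) \<le> (S - eta) powr (2*m)"
    unfolding d_def using S m eta0 half small by (intro powr_perturb_down) auto
  also have "\<dots> \<le> norm y powr (2*m)" using lo half m S by (intro powr_mono2) auto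
  finally have down: "S powr (2*m) * (1 - d) \<le> norm y powr (2*m)" .
  have "S powr (2*m) * d \<le> S powr (2*m) * (1 / (3 * N))" using d by (intro mult_left_mono) auto
  thus ?thesis using up down by (simp add: abs_le_iff algebra_simps)
qed

text \<open>Put \<open>e = axis i 1\<close>.  If \<open>b\<^sup>1\<^sup>/\<^sup>m T R = (N/m)\<^sup>1\<^sup>/\<^sup>m\<close>, then
  for \<open>x\<close> near \<open>T e\<close> and \<open>y\<close> near \<open>R e\<close> the series of \<open>K\<^sub>b\<^sub>m(x,y)\<close> is dominated by its \<open>N\<close>-th
  term, whose size is at least \<open>exp (peak_exponent n m N)\<close>; hence \<open>Re K\<^sub>b\<^sub>m(x,y)\<close> is at least a
  quarter of that, times the normalising constant.\<close>
lemma kernel_lower_near_peak: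
  fixes x y :: "complex^('n::finite)" and i :: 'n and N :: nat and R T eta :: real
  defines "n \<equiv> CARD('n)"
  assumes m: "m > 0" and b: "b > 0" and N: "N \<ge> 1" "2 * m \<le> real N"
    and tail: "\<And>k s. k \<ge> N^2 \<Longrightarrow> 0 \<le> s \<Longrightarrow> s \<le> 2 * (3 * real k / m^2) powr (1/(2*m)) \<Longrightarrow>
                 kcoeff n m k * s ^ k \<le> (1/2) ^ k"
    and peak4: "ln 4 \<le> peak_exponent n m (real N)"
    and R: "R > 0" and T: "T > 0" and etaR: "12 * real N^2 * eta \<le> R" and etaT: "12 * real N^2 * eta \<le> T"
    and peak: "b powr (1/m) * (T * R) = (real N / m) powr (1/m)"
    and x: "x \<in> ball (T *\<^sub>R axis i 1) eta" and y: "y \<in> ball (R *\<^sub>R axis i 1) eta"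
  shows "m * b powr (real n / m) / pi ^ n * exp (peak_exponent n m (real N)) / 4
           \<le> Re (kernel b m x y)"
proof -
  define C0 where "C0 = m * b powr (real n / m) / pi ^ n"
  define AZ where "AZ = kcoeff n m N * ((real N / m) powr (1/m)) ^ N"
  have n: "n \<ge> 1" unfolding n_def by (simp add: Suc_le_eq)
  have C0: "C0 > 0" unfolding C0_def using m b by simp
  have AZ: "exp (peak_exponent n m (real N)) \<le> AZ"
    unfolding AZ_def using N m by (intro kcoeff_peak_lower m n) (simp add: field_simps)
  have AZ4: "4 \<le> AZ" using peak4 AZ by (smt (verit) exp_le_cancel_iff exp_ln)
  have w: "norm (cinner x y - of_real (T * R)) \<le> (T * R) / (3 * real N ^ 2)"
    by (rule cinner_near_peak[OF N(1) R T etaR etaT x y])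
  have "AZ / 2 - 1 \<le> Re (kseries n m (b powr (1/m)) (cinner x y))"
    unfolding AZ_def peak[symmetric]
    by (rule kseries_Re_lower[OF m n _ N(1) _ tail peak w]) (use b T R in auto)
  moreover have "AZ / 4 \<le> AZ / 2 - 1" using AZ4 by simp
  ultimately have "C0 * exp (peak_exponent n m (real N)) / 4 \<le> C0 * Re (kseries n m (b powr (1/m)) (cinner x y))"
    using AZ C0 by (simp add: mult_left_mono)
  thus ?thesis
    unfolding kernel_eq n_def[symmetric] C0_def[symmetric] by (simp add: Re_complex_of_real)
qed

text \<open>Apply the boundedness hypothesis to the test function
  concentrated on the ball \<open>B(v,\<eta>)\<close>: if \<open>Re K \<ge> K\<^sub>m\<^sub>i\<^sub>n\<close> on \<open>B(u,\<eta>) \<times> B(v,\<eta>)\<close>, then \<open>|P f| \<ge> K\<^sub>m\<^sub>i\<^sub>n V\<close>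
  on \<open>B(u,\<eta>)\<close> (\<open>V\<close> the volume of the balls), which bounds the \<open>L\<^sup>q\<close>-norm of \<open>P f\<close> from below,
  while the weight bound \<open>M\<close> on \<open>B(v,\<eta>)\<close> bounds the \<open>L\<^sup>p\<close>-norm of \<open>f\<close> from above.\<close>
lemma test_function_inequality:
  fixes u v :: "complex^('n::finite)" and C Kmin Q M eta :: real
  assumes m: "m > 0" and g: "g \<ge> 0" and p: "p > 0" and q: "q > 0"
    and bounded: "\<And>f :: complex ^ 'n \<Rightarrow> complex. inLp 2 b m f \<Longrightarrow> inLp p a m f \<Longrightarrow>
          Proj b m f \<in> borel_measurable lborel \<and>
          (\<integral>\<^sup>+ z. ennreal (norm (Proj b m f z) powr q) \<partial>mu g m) \<le> ennreal ((C * Lpnorm p a m f) powr q)"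
    and eta: "eta > 0" and Kmin: "Kmin > 0"
    and kernel_lower: "\<And>x y. x \<in> ball u eta \<Longrightarrow> y \<in> ball v eta \<Longrightarrow> Kmin \<le> Re (kernel b m x y)"
    and Q: "\<And>x. x \<in> ball u eta \<Longrightarrow> norm x powr (2*m) \<le> Q"
    and M: "\<And>y. y \<in> ball v eta \<Longrightarrow> (p * b - a) * norm y powr (2*m) \<le> M"
  shows "measure lborel (ball v eta) * exp (- g * Q) * (Kmin * measure lborel (ball v eta)) powr q
           \<le> ((\<bar>C\<bar> + 1) * (measure lborel (ball v eta) * exp M) powr (1/p)) powr q"
proof -
  define f where "f = test_fun v eta b m"
  define V where "V = measure lborel (ball v eta)"
  have Lpnorm_nonneg: "0 \<le> Lpnorm p a m f" unfolding Lpnorm_def by simp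
  have V: "V > 0" unfolding V_def using eta by (rule content_ball_pos)
  have Vu: "measure lborel (ball u eta) = V" unfolding V_def using eta by (simp add: content_ball)
  have "inLp 2 b m f" "inLp p a m f" unfolding f_def using m p by (auto intro: test_fun_inLp)
  from bounded[OF this] have measP: "Proj b m f \<in> borel_measurable lborel"
    and bound: "(\<integral>\<^sup>+ z. ennreal (norm (Proj b m f z) powr q) \<partial>mu g m) \<le> ennreal ((C * Lpnorm p a m f) powr q)"
    by auto
  have "ennreal (measure lborel (ball u eta) * exp (- g * Q) * (Kmin * measure lborel (ball u eta)) powr q)
          \<le> (\<integral>\<^sup>+ x. ennreal (norm (Proj b m f x) powr q) \<partial>mu g m)"
  proof (rule weighted_Lq_lower_on_ball[OF m g q measP])
    fix x assume x: "x \<in> ball u eta"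
    have "Kmin * V \<le> norm (Proj b m f x)"
      unfolding f_def V_def by (rule Proj_test_fun_lower[OF m]) (use kernel_lower x in auto)
    thus "Kmin * measure lborel (ball u eta) \<le> norm (Proj b m f x) \<and> norm x powr (2*m) \<le> Q"
      using Q x Vu by simp
  qed (use Kmin V Vu in auto)
  hence "ennreal (V * exp (- g * Q) * (Kmin * V) powr q) \<le> ennreal ((C * Lpnorm p a m f) powr q)"
    unfolding Vu using bound by (rule order.trans)
  hence "V * exp (- g * Q) * (Kmin * V) powr q \<le> (C * Lpnorm p a m f) powr q"
    by (subst (asm) ennreal_le_iff) auto
  also have "\<dots> = (\<bar>C\<bar> * Lpnorm p a m f) powr q"
    using Lpnorm_nonneg by (subst powr_abs_base) (simp add: abs_mult)
  also have "\<dots> \<le> ((\<bar>C\<bar> + 1) * (V * exp M) powr (1/p)) powr q"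
  proof (intro powr_mono2 mult_mono)
    show "Lpnorm p a m f \<le> (V * exp M) powr (1/p)"
      unfolding f_def V_def by (rule test_fun_Lpnorm[OF m p M])
  qed (use q Lpnorm_nonneg in auto)
  finally show ?thesis unfolding V_def .
qed

lemma test_function_log_inequality:
  fixes u v :: "complex^('n::finite)" and C Kmin Q M eta :: real
  assumes m: "m > 0" and g: "g \<ge> 0" and p: "p > 0" and q: "q > 0"
    and bounded: "\<And>f :: complex ^ 'n \<Rightarrow> complex. inLp 2 b m f \<Longrightarrow> inLp p a m f \<Longrightarrow>
          Proj b m f \<in> borel_measurable lborel \<and>
          (\<integral>\<^sup>+ z. ennreal (norm (Proj b m f z) powr q) \<partial>mu g m) \<le> ennreal ((C * Lpnorm p a m f) powr q)"
    and eta: "eta > 0" and Kmin: "Kmin > 0"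
    and kernel_lower: "\<And>x y. x \<in> ball u eta \<Longrightarrow> y \<in> ball v eta \<Longrightarrow> Kmin \<le> Re (kernel b m x y)"
    and Q: "\<And>x. x \<in> ball u eta \<Longrightarrow> norm x powr (2*m) \<le> Q"
    and M: "\<And>y. y \<in> ball v eta \<Longrightarrow> (p * b - a) * norm y powr (2*m) \<le> M"
  shows "(1 + q - q/p) * ln (measure lborel (ball v eta)) - g * Q + q * ln Kmin
           - q * ln (\<bar>C\<bar> + 1) - q/p * M \<le> 0"
proof -
  define V where "V = measure lborel (ball v eta)"
  have V: "V > 0" unfolding V_def using eta by (rule content_ball_pos)
  have "V * exp (- g * Q) * (Kmin * V) powr q \<le> ((\<bar>C\<bar> + 1) * (V * exp M) powr (1/p)) powr q"
    unfolding V_def by (rule test_function_inequality[OF assms])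
  hence "ln (V * exp (- g * Q) * (Kmin * V) powr q) \<le> ln (((\<bar>C\<bar> + 1) * (V * exp M) powr (1/p)) powr q)"
    using V Kmin by (subst ln_le_cancel_iff) auto
  moreover have "ln (V * exp (- g * Q) * (Kmin * V) powr q) = ln V - g * Q + q * ln Kmin + q * ln V"
    using V Kmin by (simp add: ln_mult ln_powr algebra_simps)
  moreover have "ln (((\<bar>C\<bar> + 1) * (V * exp M) powr (1/p)) powr q) = q * (ln (\<bar>C\<bar> + 1) + (ln V + M) / p)"
    using V by (simp add: ln_mult)
  hence "ln (((\<bar>C\<bar> + 1) * (V * exp M) powr (1/p)) powr q) = q * ln (\<bar>C\<bar> + 1) + q/p * ln V + q/p * M"
    by (simp add: algebra_simps add_divide_distrib)
  moreover have "(1 + q - q/p) * ln V = ln V + q * ln V - q/p * ln V" by (simp add: algebra_simps)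
  ultimately show ?thesis unfolding V_def[symmetric] by linarith
qed

text \<open>These choices put the peak of the kernel series at the \<open>N\<close>-th term.\<close>
lemma test_scales:
  fixes N :: nat and m b g q R T :: real
  defines "la \<equiv> m * b^2 * q / (2*g)"
  assumes R_def: "R = (real N / la) powr (1/(2*m))"
    and T_def: "T = (b * q / (2*g)) powr (1/m) * R"
    and m: "m > 0" and b: "b > 0" and g: "g > 0" and q: "q > 0" and N: "N \<ge> 1"
  shows "R > 0" "R powr (2*m) = real N / la" "T > 0" "T powr (2*m) = q * real N / (2*g*m)"
    and "b powr (1/m) * (T * R) = (real N / m) powr (1/m)"
proof -
  have la: "la > 0" unfolding la_def using m b g q by simp
  have NR: "real N > 0" using N by simp
  show R: "R > 0" unfolding R_def using NR la by simp
  show "T > 0" unfolding T_def using R b q g by simp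
  show Rp: "R powr (2*m) = real N / la" unfolding R_def using NR la m by (simp add: powr_powr)
  have "T powr (2*m) = (b * q / (2*g)) powr 2 * R powr (2*m)"
    unfolding T_def using b q g m R by (simp add: powr_mult powr_powr)
  also have "\<dots> = (b * q / (2*g))^2 * (real N / la)" using b q g by (simp add: Rp)
  finally show "T powr (2*m) = q * real N / (2*g*m)"
    unfolding la_def using m b q g by (simp add: field_simps power2_eq_square)
  have RR: "R * R = (real N / la) powr (1/m)" unfolding R_def using NR la m
    by (simp add: powr_add[symmetric])
  have "b powr (1/m) * (T * R) = b powr (1/m) * (b * q / (2*g)) powr (1/m) * (real N / la) powr (1/m)"
    unfolding T_def RR[symmetric] by (simp add: mult_ac)
  also have "\<dots> = (b * (b * q / (2*g)) * (real N / la)) powr (1/m)"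
  proof -
    have "0 \<le> b" "0 \<le> b * q / (2*g)" "0 \<le> b * (b * q / (2*g))" "0 \<le> real N / la"
      using b q g NR la by auto
    thus ?thesis by (simp only: powr_mult)
  qed
  also have "b * (b * q / (2*g)) * (real N / la) = real N / m"
    unfolding la_def using m b q g by (simp add: field_simps power2_eq_square)
  finally show "b powr (1/m) * (T * R) = (real N / m) powr (1/m)" .
qed

lemma test_configuration:
  fixes N :: nat and m b g q :: real and i :: "'n::finite"
  defines "la \<equiv> m * b^2 * q / (2*g)" and "rho \<equiv> min ((b * q / (2*g)) powr (1/m)) 1"
  assumes m: "m > 0" and b: "b > 0" and g: "g > 0" and q: "q > 0" and N: "N \<ge> 1"
  obtains R T eta where "R > 0" "R powr (2*m) = real N / la"
    "T > 0" "T powr (2*m) = q * real N / (2*g*m)" "b powr (1/m) * (T * R) = (real N / m) powr (1/m)"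
    "eta > 0" "12 * real N^2 * eta \<le> R" "12 * real N^2 * eta \<le> T"
    "ln (measure lborel (ball (R *\<^sub>R axis i 1 :: complex^'n) eta))
       = ln (unit_ball_vol (real (2 * CARD('n)))) + real (2 * CARD('n))
           * (ln rho + (ln (real N) - ln la) / (2*m) - ln 12 - 2 * ln (real N))"
proof -
  define ka where "ka = (b * q / (2*g)) powr (1/m)"
  define R where "R = (real N / la) powr (1/(2*m))"
  define T where "T = ka * R"
  define eta where "eta = rho * R / (12 * real N ^ 2)"
  have la: "la > 0" unfolding la_def using m b g q by simp
  have rho: "rho > 0" "rho \<le> 1" "rho \<le> ka" unfolding rho_def ka_def using b g q by auto
  note scales = test_scales[OF R_def[unfolded la_def] T_def[unfolded ka_def] m b g q N, folded la_def]
  have eta: "eta > 0" "12 * real N^2 * eta \<le> R" "12 * real N^2 * eta \<le> T"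
    unfolding eta_def T_def using rho scales(1) N by (auto simp: mult_right_mono)
  have "measure lborel (ball (R *\<^sub>R axis i 1 :: complex^'n) eta)
        = unit_ball_vol (real (2 * CARD('n))) * eta ^ (2 * CARD('n))"
    using eta(1) by (simp add: content_ball mult.commute)
  moreover have "ln eta = ln rho + (ln (real N) - ln la) / (2*m) - ln 12 - 2 * ln (real N)"
    unfolding eta_def R_def using rho N la by (simp add: ln_mult ln_div ln_powr ln_realpow)
  moreover have "0 < unit_ball_vol (real (2 * CARD('n)))" by simp
  hence "unit_ball_vol (real (2 * CARD('n))) \<noteq> 0" by (metis order_less_irrefl)
  ultimately have "ln (measure lborel (ball (R *\<^sub>R axis i 1 :: complex^'n) eta))
       = ln (unit_ball_vol (real (2 * CARD('n)))) + real (2 * CARD('n))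
           * (ln rho + (ln (real N) - ln la) / (2*m) - ln 12 - 2 * ln (real N))"
    using eta(1) by (simp add: ln_mult ln_realpow)
  with scales eta show thesis by (rule that)
qed

text \<open>The left-hand side has
  the shape \<open>(q/(2m) - q(b - a/p)/\<lambda>) N + o(N)\<close>; this is the quantity that becomes positive for
  large \<open>N\<close> when \<open>q\<close> exceeds the critical exponent.\<close>
lemma scale_inequality:
  fixes C m b g p q :: real and N :: nat and R T eta :: real and i :: "'n::finite"
  defines "n \<equiv> CARD('n)" and "la \<equiv> m * b^2 * q / (2*g)"
  assumes m: "m > 0" and b: "b > 0" and g: "g > 0" and p: "p \<ge> 1" and q: "q \<ge> 1"
    and bounded: "\<And>f :: complex ^ 'n \<Rightarrow> complex. inLp 2 b m f \<Longrightarrow> inLp p a m f \<Longrightarrow>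
          Proj b m f \<in> borel_measurable lborel \<and>
          (\<integral>\<^sup>+ z. ennreal (norm (Proj b m f z) powr q) \<partial>mu g m) \<le> ennreal ((C * Lpnorm p a m f) powr q)"
    and N: "N \<ge> 1" "2 * m \<le> real N"
    and tail: "\<And>k s. k \<ge> N^2 \<Longrightarrow> 0 \<le> s \<Longrightarrow> s \<le> 2 * (3 * real k / m^2) powr (1/(2*m)) \<Longrightarrow>
                 kcoeff n m k * s ^ k \<le> (1/2) ^ k"
    and peak4: "ln 4 \<le> peak_exponent n m (real N)"
    and R: "R > 0" "R powr (2*m) = real N / la"
    and T: "T > 0" "T powr (2*m) = q * real N / (2*g*m)"
    and peak: "b powr (1/m) * (T * R) = (real N / m) powr (1/m)"
    and eta: "eta > 0" "12 * real N^2 * eta \<le> R" "12 * real N^2 * eta \<le> T"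
  shows "(1 + q - q/p) * ln (measure lborel (ball (R *\<^sub>R axis i 1 :: complex^'n) eta))
          - (q * real N / (2*m) + q / (6*m))
          + q * (ln (m * b powr (real n / m) / pi ^ n) + peak_exponent n m (real N) - ln 4)
          - q * ln (\<bar>C\<bar> + 1) - q * (b - a/p) * (real N / la) - q * \<bar>b - a/p\<bar> / (3 * la) \<le> 0"
proof -
  define e :: "complex^'n" where "e = axis i 1"
  define V where "V = measure lborel (ball (R *\<^sub>R e) eta)"
  define Kmin where "Kmin = m * b powr (real n / m) / pi ^ n * exp (peak_exponent n m (real N)) / 4"
  define M where "M = (p * b - a) * (real N / la) + \<bar>p * b - a\<bar> * (real N / la / (3 * real N))"
  have la: "la > 0" unfolding la_def using m b g q by simp
  have Kmin: "Kmin > 0" unfolding Kmin_def using m b by simp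
  have ne: "norm (S *\<^sub>R e) = S" if "S > 0" for S using that by (simp add: e_def norm_axis)
  have Nm: "1 \<le> real N" "m \<le> real N" using N m by auto
  define Q where "Q = q * real N / (2*g*m) + q * real N / (2*g*m) / (3 * real N)"
  have g0: "g \<ge> 0" and p0: "p > 0" and q0: "q > 0" using g p q by auto
  have "(1 + q - q/p) * ln V - g * Q + q * ln Kmin - q * ln (\<bar>C\<bar> + 1) - q/p * M \<le> 0"
    unfolding V_def
  proof (rule test_function_log_inequality[OF m g0 p0 q0 bounded eta(1) Kmin])
    fix x y assume "x \<in> ball (T *\<^sub>R e) eta" "y \<in> ball (R *\<^sub>R e) eta"
    from kernel_lower_near_peak[OF m b N tail[unfolded n_def] peak4[unfolded n_def]
                                   R(1) T(1) eta(2,3) peak this[unfolded e_def]]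
    show "Kmin \<le> Re (kernel b m x y)" unfolding Kmin_def n_def .
  next
    fix x assume "x \<in> ball (T *\<^sub>R e) eta"
    from norm_powr_on_small_ball[OF ne[OF T(1)] T(1) m Nm eta(3) this, unfolded T(2)]
    show "norm x powr (2*m) \<le> Q" unfolding Q_def by linarith
  next
    fix y assume "y \<in> ball (R *\<^sub>R e) eta"
    from norm_powr_on_small_ball[OF ne[OF R(1)] R(1) m Nm eta(2) this, unfolded R(2)]
    show "(p * b - a) * norm y powr (2*m) \<le> M" unfolding M_def by (rule mult_le_of_abs_diff_le)
  qed
  moreover have "g * Q = q * real N / (2*m) + q / (6*m)"
    unfolding Q_def using g m Nm by (simp add: field_simps)
  moreover have "q * ln Kmin = q * (ln (m * b powr (real n / m) / pi ^ n) + peak_exponent n m (real N) - ln 4)"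
    unfolding Kmin_def using m b by (simp add: ln_mult ln_div)
  moreover have "q/p * M = q * (b - a/p) * (real N / la) + q * \<bar>b - a/p\<bar> / (3 * la)"
  proof -
    have "\<bar>p * b - a\<bar> = p * \<bar>b - a/p\<bar>" using p by (simp add: abs_mult[symmetric] field_simps)
    thus ?thesis unfolding M_def using p Nm la by (simp add: field_simps)
  qed
  ultimately have "(1 + q - q/p) * ln V - (q * real N / (2*m) + q / (6*m))
          + q * (ln (m * b powr (real n / m) / pi ^ n) + peak_exponent n m (real N) - ln 4)
          - q * ln (\<bar>C\<bar> + 1) - q * (b - a/p) * (real N / la) - q * \<bar>b - a/p\<bar> / (3 * la) \<le> 0"
    by (smt (verit))
  thus ?thesis unfolding V_def e_def .
qed

text \<open>Normal form of the scale inequality: at every admissible scale \<open>N\<close> the boundedness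
  hypothesis gives, for the constants \<open>s, A, D\<close> below, \<open>s N + A log N + q (peak_exponent n m N - N/m) + D \<le> 0\<close>, where the leading
  coefficient \<open>s\<close> is a positive multiple of \<open>q b\<^sup>2 - 4 g (b - a/p)\<close> and \<open>A, D\<close> do not depend
  on \<open>N\<close>.\<close>
lemma normalized_scale_inequality:
  fixes C m b g p q a s A D :: real and N :: nat
  defines "n \<equiv> CARD('n::finite)" and "la \<equiv> m * b^2 * q / (2*g)"
    and "rho \<equiv> min ((b * q / (2*g)) powr (1/m)) 1"
  assumes s_def: "s = q / (2*m) - q * (b - a/p) / la"
    and A_def: "A = (1 + q - q/p) * real (2*n) * (1/(2*m) - 2)"
    and D_def: "D = (1 + q - q/p) * (ln (unit_ball_vol (real (2*n))) + real (2*n) * (ln rho - ln la / (2*m) - ln 12))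
      - q / (6*m) + q * (ln (m * b powr (real n / m) / pi ^ n) - ln 4) - q * ln (\<bar>C\<bar> + 1)
      - q * \<bar>b - a/p\<bar> / (3 * la)"
    and m: "m > 0" and b: "b > 0" and g: "g > 0" and p: "p \<ge> 1" and q: "q \<ge> 1"
    and bounded: "\<And>f :: complex ^ 'n \<Rightarrow> complex. inLp 2 b m f \<Longrightarrow> inLp p a m f \<Longrightarrow>
          Proj b m f \<in> borel_measurable lborel \<and>
          (\<integral>\<^sup>+ z. ennreal (norm (Proj b m f z) powr q) \<partial>mu g m) \<le> ennreal ((C * Lpnorm p a m f) powr q)"
    and N: "N \<ge> 1" "2 * m \<le> real N"
    and tail: "\<And>k s. k \<ge> N^2 \<Longrightarrow> 0 \<le> s \<Longrightarrow> s \<le> 2 * (3 * real k / m^2) powr (1/(2*m)) \<Longrightarrow>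
                 kcoeff n m k * s ^ k \<le> (1/2) ^ k"
    and peak4: "ln 4 \<le> peak_exponent n m (real N)"
  shows "s * real N + A * ln (real N) + q * (peak_exponent n m (real N) - real N / m) + D \<le> 0"
proof -
  have q0: "q > 0" using q by simp
  obtain R T eta where R: "R > 0" "R powr (2*m) = real N / la"
    and T: "T > 0" "T powr (2*m) = q * real N / (2*g*m)"
    and peak: "b powr (1/m) * (T * R) = (real N / m) powr (1/m)"
    and eta: "eta > 0" "12 * real N^2 * eta \<le> R" "12 * real N^2 * eta \<le> T"
    and volume: "ln (measure lborel (ball (R *\<^sub>R axis (undefined::'n) 1 :: complex^'n) eta))
       = ln (unit_ball_vol (real (2*n))) + real (2*n) * (ln rho + (ln (real N) - ln la) / (2*m) - ln 12 - 2 * ln (real N))"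
    by (rule test_configuration[where i = "undefined :: 'n", OF m b g q0 N(1), folded la_def rho_def n_def])
  have scale: "(1 + q - q/p) * ln (measure lborel (ball (R *\<^sub>R axis (undefined::'n) 1 :: complex^'n) eta))
          - (q * real N / (2*m) + q / (6*m))
          + q * (ln (m * b powr (real n / m) / pi ^ n) + peak_exponent n m (real N) - ln 4)
          - q * ln (\<bar>C\<bar> + 1) - q * (b - a/p) * (real N / la) - q * \<bar>b - a/p\<bar> / (3 * la) \<le> 0"
    unfolding n_def la_def
    by (rule scale_inequality[OF m b g p q bounded N tail[unfolded n_def] peak4[unfolded n_def]
                              R[unfolded la_def] T peak eta])
  have "s * real N = q * real N / (2*m) - q * (b - a/p) * (real N / la)"
    unfolding s_def by (simp add: left_diff_distrib)
  moreover have "q * (peak_exponent n m (real N) - real N / m)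
      = q * peak_exponent n m (real N) - 2 * (q * real N / (2*m))"
    using m by (simp add: right_diff_distrib)
  moreover have "(1 + q - q/p) * (ln (unit_ball_vol (real (2*n)))
        + real (2*n) * (ln rho + (ln (real N) - ln la) / (2*m) - ln 12 - 2 * ln (real N)))
      = A * ln (real N) + (1 + q - q/p) * (ln (unit_ball_vol (real (2*n)))
        + real (2*n) * (ln rho - ln la / (2*m) - ln 12))"
    unfolding A_def by (simp add: algebra_simps diff_divide_distrib add_divide_distrib)
  moreover have "q * (ln (m * b powr (real n / m) / pi ^ n) + peak_exponent n m (real N) - ln 4)
      = q * (ln (m * b powr (real n / m) / pi ^ n) - ln 4) + q * peak_exponent n m (real N)"
    by (simp add: algebra_simps)
  ultimately show ?thesis using scale[unfolded volume] unfolding D_def by (smt (verit))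
qed

text \<open>Asymptotics in the scale parameter: \<open>peak_exponent n m x = x/m + O(log x)\<close>, so any expression
  \<open>s x + A log x + B (peak_exponent n m x - x/m) + D\<close> with \<open>s > 0\<close> is eventually positive.\<close>
lemma peak_exponent_asymptotics:
  fixes s m A B D :: real and n :: nat
  assumes s: "s > 0" and m: "m > 0" and n: "n \<ge> 1"
  shows "eventually (\<lambda>x. ln 4 \<le> peak_exponent n m x \<and>
           0 < s * x + A * ln x + B * (peak_exponent n m x - x / m) + D) at_top"
proof -
  define nn where "nn = real n"
  have nn: "nn \<ge> 1" using n by (simp add: nn_def)
  have "eventually (\<lambda>x. ln 4 \<le> x/m * ln (x/m) + (nn+x)/m - 1 - ((nn+x)/m + 2) * ln ((nn+x)/m + 1)) at_top"
    using m nn by real_asymp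
  moreover have "eventually (\<lambda>x. 0 < s * x + A * ln x
      + B * (x/m * ln (x/m) + (nn+x)/m - 1 - ((nn+x)/m + 2) * ln ((nn+x)/m + 1) - x/m) + D) at_top"
    using s m nn by real_asymp
  ultimately show ?thesis unfolding peak_exponent_def nn_def by eventually_elim auto
qed

text \<open>Otherwise the leading coefficient \<open>s\<close> of the normalized scale
  inequality is positive, and the inequality fails for all large scales \<open>N\<close>.\<close>
lemma exponent_bound_from_constant:
  fixes C m b g p q :: real
  assumes m: "m > 0" and b: "b > 0" and g: "g > 0" and p: "p \<ge> 1" and q: "q \<ge> 1"
    and bounded: "\<And>f :: complex ^ ('n::finite) \<Rightarrow> complex. inLp 2 b m f \<Longrightarrow> inLp p a m f \<Longrightarrow>
          Proj b m f \<in> borel_measurable lborel \<and>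
          (\<integral>\<^sup>+ z. ennreal (norm (Proj b m f z) powr q) \<partial>mu g m) \<le> ennreal ((C * Lpnorm p a m f) powr q)"
  shows "q * b^2 \<le> 4 * g * (b - a / p)"
proof (rule ccontr)
  assume contra: "\<not> q * b^2 \<le> 4 * g * (b - a / p)"
  define n where "n = CARD('n)"
  define la where "la = m * b^2 * q / (2*g)"
  define rho where "rho = min ((b * q / (2*g)) powr (1/m)) 1"
  define s where "s = q / (2*m) - q * (b - a/p) / la"
  define A where "A = (1 + q - q/p) * real (2*n) * (1/(2*m) - 2)"
  define D where "D = (1 + q - q/p) * (ln (unit_ball_vol (real (2*n))) + real (2*n) * (ln rho - ln la / (2*m) - ln 12))
      - q / (6*m) + q * (ln (m * b powr (real n / m) / pi ^ n) - ln 4) - q * ln (\<bar>C\<bar> + 1)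
      - q * \<bar>b - a/p\<bar> / (3 * la)"
  have n: "n \<ge> 1" unfolding n_def by (simp add: Suc_le_eq)
  have s: "s > 0"
  proof -
    have "s = (q * b^2 - 4 * g * (b - a/p)) / (2 * m * b^2)"
      unfolding s_def la_def using m b g q by (simp add: field_simps)
    thus ?thesis using contra m b by simp
  qed
  obtain K2 where tail: "\<And>k s. k \<ge> K2 \<Longrightarrow> 0 \<le> s \<Longrightarrow> s \<le> 2 * (3 * real k / m^2) powr (1/(2*m)) \<Longrightarrow>
            kcoeff n m k * s ^ k \<le> (1/2) ^ k"
    using kcoeff_tail_bound[OF m n] by blast
  obtain X where X: "\<And>x. x \<ge> X \<Longrightarrow> ln 4 \<le> peak_exponent n m x \<and>
           0 < s * x + A * ln x + q * (peak_exponent n m x - x / m) + D"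
    using peak_exponent_asymptotics[OF s m n] unfolding eventually_at_top_linorder by blast
  define N where "N = nat \<lceil>max X (2*m)\<rceil> + K2 + 1"
  have "max X (2*m) \<le> real (nat \<lceil>max X (2*m)\<rceil>)" by linarith
  hence N: "N \<ge> 1" "2 * m \<le> real N" and NX: "X \<le> real N" and NK: "K2 \<le> N^2"
    unfolding N_def by (auto simp: power2_eq_square intro: order.trans[OF _ le_square])
  have "s * real N + A * ln (real N) + q * (peak_exponent n m (real N) - real N / m) + D \<le> 0"
    unfolding n_def
    by (rule normalized_scale_inequality[OF s_def[unfolded la_def] A_def[unfolded n_def]
             D_def[unfolded n_def la_def rho_def] m b g p q bounded N])
       (use tail NK X[OF NX] in \<open>auto simp: n_def\<close>)
  thus False using X[OF NX] by (smt (verit))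
qed

theorem proposition7:
  fixes m a b g p q :: real
  assumes "m > 0" and "b > 0" and "g > 0"
    and "1 \<le> p" and "1 \<le> q"
    and "P_bounded b m p a q g TYPE('n::finite)"
  shows "4 * g / (b\<^sup>2 * q) * (b - a / p) \<ge> 1 \<and> b - a / p > 0"
proof -
  obtain C where "\<And>f :: complex ^ 'n \<Rightarrow> complex. inLp 2 b m f \<Longrightarrow> inLp p a m f \<Longrightarrow>
        Proj b m f \<in> borel_measurable lborel \<and>
        (\<integral>\<^sup>+ z. ennreal (norm (Proj b m f z) powr q) \<partial>mu g m) \<le> ennreal ((C * Lpnorm p a m f) powr q)"
    using assms(6) unfolding P_bounded_def by blast
  hence key: "q * b^2 \<le> 4 * g * (b - a / p)"
    using exponent_bound_from_constant[OF assms(1-5)] by blast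
  have qb: "0 < q * b^2" using assms(2,5) by simp
  hence "b - a / p > 0" using key assms(3) by (smt (verit) mult_nonneg_nonpos)
  moreover have "1 \<le> 4 * g / (b^2 * q) * (b - a / p)"
    using key qb by (simp add: field_simps)
  ultimately show ?thesis by simp
qed

end
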